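(* Let $n\ge2$, $m\ge2$ be integers, let $\mathcal{V}=\mathcal{V}_1\otimes\dots\otimes\mathcal{V}_m$ be a tensor product of vector spaces over a field $\mathbb{F}$, let $\{x_a : a\in[n]\}$ be a multiset of product tensors with $x_a=x_{a,1}\otimes\dots\otimes x_{a,m}$, and for $S\subseteq[n]$, $j\in[m]$ let $d_j^S=\dim\operatorname{span}\{x_{a,j}:a\in S\}$. Let $q \in [n-1]$, $s \in [q]$, and $r$ be positive integers with $n+1 \leq r \leq n+\lceil (n-q)/s\rceil$, and let $l=\lfloor q/s\rfloor$. Suppose that for every subset $S \subseteq [n]$ with $s+1\leq |S| \leq n$, $$2|S|+\max\left\{0,(r-n)-\left\lceil\frac{n-q+s}{|S|}\right\rceil+1\right\} \leq \sum_{j=1}^m (d_j^S -1)+1.$$ Then for any multiset of product tensors $\{y_a : a \in [r]\}$ with $\sum_{a \in [n]} x_a= \sum_{a \in [r]} y_a$ such that the pair $(\sum_{a \in [n]} x_a,\sum_{a \in [r]} y_a)$ is irreducible, this pair of decompositions has an $(s, l)$-subpartition.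
   Context: $[n]=\{1,\dots,n\}$. A product tensor is a non-zero tensor $z_1\otimes\dots\otimes z_m$, $z_j\in\mathcal{V}_j$. For product tensors with $\sum_{a\in[n]}x_a=\sum_{a\in[r]}y_a$: the pair $(\sum_{a\in[n]}x_a,\sum_{a\in[r]}y_a)$ is reducible if there exist $Q\subseteq[n]$, $R\subseteq[r]$ with $|Q|>|R|$ and $\sum_{a\in Q}x_a=\sum_{a\in R}y_a$, and irreducible otherwise. The pair has an $(s,l)$-subpartition if there exist pairwise disjoint subsets $Q_1,\dots,Q_l\subseteq[n]$ and pairwise disjoint subsets $R_1,\dots,R_l\subseteq[r]$ with $\max\{1,|R_p|\}\le|Q_p|\le s$ and $\sum_{a\in Q_p}x_a=\sum_{a\in R_p}y_a$ for all $p\in[l]$. *)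

theory Defs
  imports Complex_Main "HOL-Library.Function_Algebras"
begin

text \<open>Every vector space over a field F is isomorphic to a subspace of
  F^I (functions I -> F) for some index set I; we represent vectors of each tensor
  factor V_j as functions of type 'i => 'a, with 'a a field.  A product tensor
  z_1 (x) ... (x) z_m (given by a component family z :: nat => 'i => 'a, factors
  indexed by j in {1..m}) is represented by its coordinate function
  (idx :: nat => 'i) |-> prod_{j=1..m} z j (idx j); this map from the algebraic
  tensor product into functions on I^m is injective, so equalities of sums of
  product tensors are faithfully captured.\<close>

definition fscale :: "'a::field \<Rightarrow> ('i \<Rightarrow> 'a) \<Rightarrow> ('i \<Rightarrow> 'a)" where
  "fscale c f = (\<lambda>i. c * f i)"

global_interpretation fvs: vector_space "fscale :: 'a::field \<Rightarrow> ('i \<Rightarrow> 'a) \<Rightarrow> ('i \<Rightarrow> 'a)"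
  by unfold_locales (auto simp: fscale_def algebra_simps fun_eq_iff)

definition vdim :: "('i \<Rightarrow> 'a::field) set \<Rightarrow> nat" where
  "vdim V = fvs.dim V"

definition ptensor :: "nat \<Rightarrow> (nat \<Rightarrow> 'i \<Rightarrow> 'a::field) \<Rightarrow> (nat \<Rightarrow> 'i) \<Rightarrow> 'a" where
  "ptensor m z = (\<lambda>idx. \<Prod>j\<in>{1..m}. z j (idx j))"

definition is_product_tensor :: "nat \<Rightarrow> (nat \<Rightarrow> 'i \<Rightarrow> 'a::field) \<Rightarrow> bool" where
  "is_product_tensor m z \<longleftrightarrow> (\<forall>j\<in>{1..m}. z j \<noteq> 0)"

definition tsum :: "nat \<Rightarrow> (nat \<Rightarrow> nat \<Rightarrow> 'i \<Rightarrow> 'a::field) \<Rightarrow> nat set \<Rightarrow> (nat \<Rightarrow> 'i) \<Rightarrow> 'a" where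
  "tsum m x A = (\<lambda>idx. \<Sum>a\<in>A. ptensor m (x a) idx)"

definition reducible :: "nat \<Rightarrow> nat \<Rightarrow> nat \<Rightarrow> (nat \<Rightarrow> nat \<Rightarrow> 'i \<Rightarrow> 'a::field)
    \<Rightarrow> (nat \<Rightarrow> nat \<Rightarrow> 'i \<Rightarrow> 'a) \<Rightarrow> bool" where
  "reducible m n r x y \<longleftrightarrow>
     (\<exists>Q R. Q \<subseteq> {1..n} \<and> R \<subseteq> {1..r} \<and> card Q > card R \<and> tsum m x Q = tsum m y R)"

definition irreducible_pair :: "nat \<Rightarrow> nat \<Rightarrow> nat \<Rightarrow> (nat \<Rightarrow> nat \<Rightarrow> 'i \<Rightarrow> 'a::field)
    \<Rightarrow> (nat \<Rightarrow> nat \<Rightarrow> 'i \<Rightarrow> 'a) \<Rightarrow> bool" where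
  "irreducible_pair m n r x y \<longleftrightarrow> \<not> reducible m n r x y"

definition has_subpartition :: "nat \<Rightarrow> nat \<Rightarrow> nat \<Rightarrow> (nat \<Rightarrow> nat \<Rightarrow> 'i \<Rightarrow> 'a::field)
    \<Rightarrow> (nat \<Rightarrow> nat \<Rightarrow> 'i \<Rightarrow> 'a) \<Rightarrow> nat \<Rightarrow> nat \<Rightarrow> bool" where
  "has_subpartition m n r x y s l \<longleftrightarrow>
     (\<exists>Q R :: nat \<Rightarrow> nat set.
        (\<forall>p\<in>{1..l}. Q p \<subseteq> {1..n} \<and> R p \<subseteq> {1..r}) \<and>
        (\<forall>p\<in>{1..l}. \<forall>p'\<in>{1..l}. p \<noteq> p' \<longrightarrow> Q p \<inter> Q p' = {} \<and> R p \<inter> R p' = {}) \<and>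
        (\<forall>p\<in>{1..l}. max 1 (card (R p)) \<le> card (Q p) \<and> card (Q p) \<le> s \<and>
                     tsum m x (Q p) = tsum m y (R p)))"

end

(*
  Both decompositions together form one vanishing signed sum of n + r product tensors; split
  its index set into blocks on which the sum vanishes minimally.  A minimal vanishing family K
  of product tensors is connected (no two complementary subfamilies have independent spans)
  and spans a space of dimension at most |K| - 1, while a connected family spans a space of
  dimension at least sum_j (d_j - 1) + 1: for two tensor factors this comes from comparing the
  row and column ranks of a block matrix, in general from splitting off one factor at a time.
  So every block B, consisting of Q_B from the first and R_B from the second decomposition,
  satisfies sum_j (d_j(Q_B) - 1) <= |Q_B| + |R_B| - 2.  Irreducibility gives |Q_B| <= |R_B|,
  and for |Q_B| > s the hypothesis forces R_B to exceed Q_B by a definite margin.  As the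
  excesses |R_B| - |Q_B| add up to r - n, counting leaves at least floor(q/s) blocks with
  1 <= |Q_B| <= s and |R_B| <= |Q_B|, and these form the subpartition.
*)

theory Submission
  imports Defs "HOL-Library.Disjoint_Sets"
begin

section \<open>Dimensions of spans of finitely many functions\<close>

lemma sum_fun_apply [simp]: "(\<Sum>i\<in>A. f i) x = (\<Sum>i\<in>A. f i x)"
  by (induction A rule: infinite_finite_induct) auto

lemma module_hom_fscaleI:
  fixes f :: "('i \<Rightarrow> 'a::field) \<Rightarrow> ('j \<Rightarrow> 'a)"
  assumes "\<And>x y. f (x + y) = f x + f y" and "\<And>c x. f (fscale c x) = fscale c (f x)"
  shows "module_hom fscale fscale f"
  using assms by (simp add: module_hom_iff fvs.module_axioms)

lemma span_subset_spanI: "A \<subseteq> fvs.span B \<Longrightarrow> fvs.span A \<subseteq> fvs.span B"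
  by (simp add: fvs.span_minimal)

lemma module_hom_in_span:
  assumes "module_hom fscale fscale f" and "x \<in> fvs.span B" and "f ` B \<subseteq> fvs.span C"
  shows "f x \<in> fvs.span C"
  using module_hom.spans_image[OF assms(1), of "fvs.span B" B] assms(2,3) span_subset_spanI
  by (blast intro: fvs.span_superset)

lemma in_span_if_scale_in_span: "fscale c v \<in> fvs.span S \<Longrightarrow> c \<noteq> 0 \<Longrightarrow> v \<in> fvs.span S"
  using fvs.span_scale[of "fscale c v" S "inverse c"] by (simp add: fscale_def mult.assoc[symmetric])

lemma fvs_dim_empty: "fvs.dim ({} :: ('i \<Rightarrow> 'a::field) set) = 0"
  using fvs.dim_eq_card_independent[OF fvs.independent_empty] by simp

lemma fvs_dim_singleton: "fvs.dim {v :: 'i \<Rightarrow> 'a::field} = (if v = 0 then 0 else 1)"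
proof (cases "v = 0")
  case True
  then have "fvs.dim {v} = fvs.dim ({} :: ('i \<Rightarrow> 'a) set)"
    by (intro fvs.span_eq_dim) simp
  with True show ?thesis by (simp add: fvs_dim_empty)
qed (simp add: fvs.dim_eq_card_independent)

lemma finite_basis_of_subset_span:
  assumes "finite W" and "C \<subseteq> fvs.span W"
  obtains B where "B \<subseteq> C" "fvs.independent B" "C \<subseteq> fvs.span B" "finite B" "card B = fvs.dim C"
proof -
  obtain B where B: "B \<subseteq> C" "fvs.independent B" "C \<subseteq> fvs.span B"
    by (rule fvs.maximal_independent_subset)
  have "finite B"
    using fvs.independent_span_bound[OF assms(1) B(2)] B(1) assms(2) by blast
  with B that show thesis
    using fvs.basis_card_eq_dim[OF B(1) B(3) B(2)] by blast
qed

lemma dim_mono_finite: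
  assumes "finite W" and "B \<subseteq> fvs.span W" and "A \<subseteq> fvs.span B"
  shows "fvs.dim A \<le> fvs.dim B"
proof -
  obtain C where C: "B \<subseteq> fvs.span C" "finite C" "card C = fvs.dim B"
    using finite_basis_of_subset_span[OF assms(1,2)] by metis
  have "A \<subseteq> fvs.span C"
    using assms(3) span_subset_spanI[OF C(1)] by blast
  with C show ?thesis using fvs.dim_le_card by metis
qed

lemma dim_subset_finite: "finite B \<Longrightarrow> A \<subseteq> B \<Longrightarrow> fvs.dim A \<le> fvs.dim B"
  using dim_mono_finite fvs.span_superset by blast

lemma one_le_dim_if_nonzero_mem:
  assumes "finite W" and "A \<subseteq> fvs.span W" and "v \<in> A" and "v \<noteq> 0"
  shows "1 \<le> fvs.dim A"
  using dim_mono_finite[OF assms(1,2), of "{v}"] assms(4) fvs.span_base[OF assms(3)]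
  by (simp add: fvs_dim_singleton)

lemma dim_insert_in_span: "x \<in> fvs.span S \<Longrightarrow> fvs.dim (insert x S) = fvs.dim S"
  by (intro fvs.span_eq_dim fvs.span_redundant)

lemma dim_insert_not_in_span:
  assumes "finite S" and "x \<notin> fvs.span S"
  shows "fvs.dim (insert x S) = fvs.dim S + 1"
proof -
  obtain C where C: "C \<subseteq> S" "fvs.independent C" "S \<subseteq> fvs.span C" "finite C" "card C = fvs.dim S"
    using finite_basis_of_subset_span[OF assms(1) fvs.span_superset] by metis
  have "x \<notin> fvs.span C"
    using assms(2) fvs.span_mono[OF C(1)] by blast
  then have "fvs.independent (insert x C)" and "x \<notin> C"
    using fvs.independent_insertI[OF _ C(2)] fvs.span_base by auto
  moreover have "insert x S \<subseteq> fvs.span (insert x C)"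
    using C(3) fvs.span_mono[of C "insert x C"] by (auto intro: fvs.span_base)
  ultimately have "card (insert x C) = fvs.dim (insert x S)"
    using C(1) by (intro fvs.basis_card_eq_dim) auto
  with C(4,5) \<open>x \<notin> C\<close> show ?thesis by simp
qed

text \<open>Grassmann's inequality, with the intersection of the two spans replaced by any
  set \<open>C\<close> that lies in both.\<close>

lemma dim_Un_add_dim_le:
  assumes "finite A" and "finite B" and "C \<subseteq> fvs.span A" and "C \<subseteq> fvs.span B"
  shows "fvs.dim (A \<union> B) + fvs.dim C \<le> fvs.dim A + fvs.dim B"
proof -
  obtain BA where BA: "A \<subseteq> fvs.span BA" "finite BA" "card BA = fvs.dim A"
    using finite_basis_of_subset_span[OF assms(1) fvs.span_superset] by metis
  obtain BC where BC: "BC \<subseteq> C" "fvs.independent BC" "finite BC" "card BC = fvs.dim C"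
    using finite_basis_of_subset_span[OF assms(2,4)] by metis
  have "BC \<subseteq> fvs.span B"
    using BC(1) assms(4) by (rule subset_trans)
  then obtain E where E: "BC \<subseteq> E" "E \<subseteq> fvs.span B" "fvs.independent E" "fvs.span B \<subseteq> fvs.span E"
    by (rule fvs.maximal_independent_subset_extend[OF _ BC(2)])
  have "finite E"
    using fvs.independent_span_bound[OF assms(2) E(3) E(2)] by blast
  have "card E = fvs.dim B"
    using fvs.basis_card_eq_dim[OF E(2) E(4) E(3)] by simp
  let ?D = "BA \<union> (E - BC)"
  have "A \<subseteq> fvs.span ?D"
    using BA(1) fvs.span_mono[of BA ?D] by blast
  then have span_A: "fvs.span A \<subseteq> fvs.span ?D"
    by (rule span_subset_spanI)
  have "BC \<subseteq> fvs.span ?D"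
    using BC(1) assms(3) span_A by blast
  moreover have "E - BC \<subseteq> fvs.span ?D"
    using fvs.span_superset[of ?D] by blast
  ultimately have "E \<subseteq> fvs.span ?D"
    by blast
  then have "fvs.span B \<subseteq> fvs.span ?D"
    using E(4) span_subset_spanI by blast
  then have "A \<union> B \<subseteq> fvs.span ?D"
    using span_A fvs.span_superset[of A] fvs.span_superset[of B] by blast
  then have "fvs.dim (A \<union> B) \<le> card ?D"
    using BA(2) \<open>finite E\<close> by (intro fvs.dim_le_card) auto
  also have "\<dots> \<le> card BA + card (E - BC)"
    by (rule card_Un_le)
  finally show ?thesis
    using card_Diff_subset[OF BC(3) E(1)] card_mono[OF \<open>finite E\<close> E(1)] BA(3) BC(4)
      \<open>card E = fvs.dim B\<close> by linarith
qed


lemma dim_UN_add_sum_dim_le: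
  assumes "finite I" and "finite A" and "\<And>i. i \<in> I \<Longrightarrow> finite (B i)"
    and "\<And>i. i \<in> I \<Longrightarrow> C i \<subseteq> fvs.span A" and "\<And>i. i \<in> I \<Longrightarrow> C i \<subseteq> fvs.span (B i)"
  shows "fvs.dim (A \<union> (\<Union>i\<in>I. B i)) + (\<Sum>i\<in>I. fvs.dim (C i)) \<le> fvs.dim A + (\<Sum>i\<in>I. fvs.dim (B i))"
  using assms
proof (induction I rule: finite_induct)
  case (insert i I)
  let ?A = "A \<union> (\<Union>i\<in>I. B i)"
  have "C i \<subseteq> fvs.span ?A"
    using insert.prems(3)[of i] fvs.span_mono[of A ?A] by blast
  then have "fvs.dim (?A \<union> B i) + fvs.dim (C i) \<le> fvs.dim ?A + fvs.dim (B i)"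
    using insert by (intro dim_Un_add_dim_le) auto
  moreover have "?A \<union> B i = A \<union> (\<Union>i\<in>insert i I. B i)"
    by blast
  ultimately show ?case
    using insert by simp
qed simp

lemma dim_Un_le:
  assumes "finite A" and "finite B"
  shows "fvs.dim (A \<union> B) \<le> fvs.dim A + fvs.dim B"
  using dim_Un_add_dim_le[OF assms, of "{}"] by simp

lemma span_Int_eq_zero_if_dim_Un_eq:
  assumes "finite A" and "finite B" and "fvs.dim (A \<union> B) = fvs.dim A + fvs.dim B"
  shows "fvs.span A \<inter> fvs.span B = {0}"
proof (rule ccontr)
  assume "fvs.span A \<inter> fvs.span B \<noteq> {0}"
  then obtain v where "v \<in> fvs.span A" "v \<in> fvs.span B" "v \<noteq> 0"
    using fvs.span_zero by blast
  then show False
    using dim_Un_add_dim_le[OF assms(1,2), of "{v}"] assms(3) by (simp add: fvs_dim_singleton)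
qed

lemma dim_UN_le:
  assumes "finite I" and "\<And>i. i \<in> I \<Longrightarrow> finite (S i)"
  shows "fvs.dim (\<Union>i\<in>I. S i) \<le> (\<Sum>i\<in>I. fvs.dim (S i))"
  using assms
proof (induction I rule: finite_induct)
  case empty
  then show ?case by (simp add: fvs_dim_empty)
next
  case (insert i I)
  then have "fvs.dim (S i \<union> (\<Union>i\<in>I. S i)) \<le> fvs.dim (S i) + fvs.dim (\<Union>i\<in>I. S i)"
    by (intro dim_Un_le) auto
  with insert show ?case by simp
qed

lemma dim_UN_eq_sum_subset:
  assumes "finite I" and "\<And>i. i \<in> I \<Longrightarrow> finite (S i)"
    and "fvs.dim (\<Union>i\<in>I. S i) = (\<Sum>i\<in>I. fvs.dim (S i))" and "J \<subseteq> I"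
  shows "fvs.dim (\<Union>i\<in>J. S i) = (\<Sum>i\<in>J. fvs.dim (S i))"
proof -
  have fin: "finite J" "finite (I - J)"
    using assms(1,4) finite_subset by auto
  have "(\<Union>i\<in>I. S i) = (\<Union>i\<in>J. S i) \<union> (\<Union>i\<in>I - J. S i)"
    using assms(4) by blast
  then have "fvs.dim (\<Union>i\<in>I. S i) \<le> fvs.dim (\<Union>i\<in>J. S i) + fvs.dim (\<Union>i\<in>I - J. S i)"
    using fin assms(2,4) by (metis dim_Un_le finite_UN_I in_mono Diff_subset)
  moreover have "fvs.dim (\<Union>i\<in>I - J. S i) \<le> (\<Sum>i\<in>I - J. fvs.dim (S i))"
    and "fvs.dim (\<Union>i\<in>J. S i) \<le> (\<Sum>i\<in>J. fvs.dim (S i))"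
    using fin assms(2,4) by (auto intro!: dim_UN_le)
  moreover have "(\<Sum>i\<in>I. fvs.dim (S i)) = (\<Sum>i\<in>J. fvs.dim (S i)) + (\<Sum>i\<in>I - J. fvs.dim (S i))"
    using sum.subset_diff[OF assms(4,1)] by (simp add: add.commute)
  ultimately show ?thesis
    using assms(3) by linarith
qed

lemma span_UN_decompose:
  assumes "finite I" and "x \<in> fvs.span (\<Union>i\<in>I. S i)"
  obtains g where "\<And>i. i \<in> I \<Longrightarrow> g i \<in> fvs.span (S i)" and "x = (\<Sum>i\<in>I. g i)"
  using assms
proof (induction I arbitrary: x thesis rule: finite_induct)
  case empty
  then show ?case by (auto simp: zero_fun_def)
next
  case (insert i I)
  obtain a b where ab: "x = a + b" "a \<in> fvs.span (S i)" "b \<in> fvs.span (\<Union>i\<in>I. S i)"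
    using insert.prems(2) unfolding UN_insert fvs.span_Un by blast
  obtain g where g: "\<And>i. i \<in> I \<Longrightarrow> g i \<in> fvs.span (S i)" "b = (\<Sum>i\<in>I. g i)"
    using insert.IH[OF _ ab(3)] by blast
  define g' where "g' = g(i := a)"
  have "g' j \<in> fvs.span (S j)" if "j \<in> insert i I" for j
    using that g(1) ab(2) by (auto simp: g'_def)
  moreover have "(\<Sum>j\<in>I. g' j) = (\<Sum>j\<in>I. g j)"
    using insert.hyps(2) by (intro sum.cong) (auto simp: g'_def)
  then have "x = (\<Sum>j\<in>insert i I. g' j)"
    using insert.hyps ab(1) g(2) by (simp add: g'_def)
  ultimately show ?case
    by (rule insert.prems(1))
qed

lemma span_UN_decompose_nonzero:
  assumes "finite I" and "x \<in> fvs.span (\<Union>i\<in>I. S i)"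
  obtains J g where "J \<subseteq> I" and "\<And>i. i \<in> J \<Longrightarrow> g i \<in> fvs.span (S i)"
    and "\<And>i. i \<in> J \<Longrightarrow> g i \<noteq> 0" and "x = (\<Sum>i\<in>J. g i)"
proof -
  obtain g where g: "\<And>i. i \<in> I \<Longrightarrow> g i \<in> fvs.span (S i)" and x: "x = (\<Sum>i\<in>I. g i)"
    using span_UN_decompose[OF assms] by blast
  have "x = (\<Sum>i\<in>{i\<in>I. g i \<noteq> 0}. g i)"
    unfolding x using assms(1) by (intro sum.mono_neutral_right) auto
  then show thesis
    using that[of "{i\<in>I. g i \<noteq> 0}" g] g by blast
qed

lemma sum_in_span_UN:
  assumes "\<And>i. i \<in> I \<Longrightarrow> g i \<in> fvs.span (S i)"
  shows "(\<Sum>i\<in>I. g i) \<in> fvs.span (\<Union>i\<in>I. S i)"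
proof (rule fvs.span_sum)
  fix i assume "i \<in> I"
  then show "g i \<in> fvs.span (\<Union>i\<in>I. S i)"
    using assms[of i] fvs.span_mono[of "S i" "\<Union>i\<in>I. S i"] by blast
qed

text \<open>Extend a basis \<open>Z\<close> of the kernel to a basis \<open>C\<close> of \<open>span B\<close>; then \<open>f\<close> maps
  \<open>C - Z\<close> injectively onto a basis of the image.\<close>

lemma rank_nullity:
  assumes f: "module_hom fscale fscale f" and "finite B"
  shows "fvs.dim (fvs.span B) = fvs.dim (f ` fvs.span B) + fvs.dim (fvs.span B \<inter> {v. f v = 0})"
proof -
  interpret f: module_hom fscale fscale f by (rule f)
  define N where "N = fvs.span B \<inter> {v. f v = 0}"
  obtain Z where Z: "Z \<subseteq> N" "fvs.independent Z" "N \<subseteq> fvs.span Z"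
    by (rule fvs.maximal_independent_subset)
  have "Z \<subseteq> fvs.span B"
    using Z(1) unfolding N_def by blast
  then obtain C where C: "Z \<subseteq> C" "C \<subseteq> fvs.span B" "fvs.independent C" "fvs.span B \<subseteq> fvs.span C"
    by (rule fvs.maximal_independent_subset_extend[OF _ Z(2)])
  have "finite C"
    using fvs.independent_span_bound[OF \<open>finite B\<close> C(3,2)] by blast
  have span_C: "fvs.span C = fvs.span B"
    using C(2,4) span_subset_spanI by blast
  define Y where "Y = C - Z"
  have Y: "Y \<subseteq> C" "Y \<inter> Z = {}" "C = Y \<union> Z" "finite Y" "finite Z"
    using C(1) \<open>finite C\<close> finite_subset unfolding Y_def by auto
  have indep_Y: "fvs.independent Y"
    using fvs.independent_mono[OF C(3) Y(1)] .
  have "fvs.dim (Y \<union> Z) = fvs.dim Y + fvs.dim Z"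
    using C(3) Y indep_Y Z(2) by (simp add: fvs.dim_eq_card_independent card_Un_disjoint)
  then have YZ: "fvs.span Y \<inter> fvs.span Z = {0}"
    by (rule span_Int_eq_zero_if_dim_Un_eq[OF Y(4,5)])
  have inj: "inj_on f (fvs.span Y)"
  proof -
    have "v = 0" if "v \<in> fvs.span Y" "f v = 0" for v
    proof -
      have "v \<in> fvs.span B"
        using that(1) fvs.span_mono[OF Y(1)] span_C by blast
      then have "v \<in> fvs.span Z"
        using that(2) Z(3) unfolding N_def by blast
      with that(1) YZ show ?thesis by blast
    qed
    then show ?thesis
      using f.inj_on_iff_eq_0[of "fvs.span Y"] by blast
  qed
  have "f ` C \<subseteq> fvs.span (f ` Y)"
  proof
    fix z assume "z \<in> f ` C"
    then obtain c where c: "c \<in> C" "z = f c" by blast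
    show "z \<in> fvs.span (f ` Y)"
    proof (cases "c \<in> Z")
      case True
      then have "z = 0"
        using c(2) Z(1) unfolding N_def by blast
      then show ?thesis by (simp add: fvs.span_zero)
    qed (use c Y_def in \<open>auto intro: fvs.span_base\<close>)
  qed
  then have "fvs.span (f ` C) = fvs.span (f ` Y)"
    using Y(1) fvs.span_mono[of "f ` Y" "f ` C"] span_subset_spanI by blast
  then have "fvs.dim (f ` fvs.span B) = fvs.dim (f ` Y)"
    using f.span_image span_C fvs.dim_span by metis
  also have "\<dots> = card Y"
    using fvs.dim_eq_card_independent[OF f.independent_injective_image[OF indep_Y inj]]
      card_image[OF inj_on_subset[OF inj fvs.span_superset]] by simp
  finally have "fvs.dim (f ` fvs.span B) = card Y" .
  moreover have "card C = fvs.dim (fvs.span B)"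
    using fvs.basis_card_eq_dim[OF C(2,4,3)] by simp
  moreover have "card Z = fvs.dim N"
    using fvs.basis_card_eq_dim[OF Z(1,3,2)] .
  ultimately show ?thesis
    using Y card_Un_disjoint unfolding N_def by metis
qed

lemma dim_image_le:
  assumes "module_hom fscale fscale f" and "finite B"
  shows "fvs.dim (f ` B) \<le> fvs.dim B"
  using rank_nullity[OF assms] module_hom.span_image[OF assms(1)] fvs.dim_span by (metis le_add1)

lemma dim_image_eq_if_inj_on:
  assumes f: "module_hom fscale fscale f" and "finite B" and inj: "inj_on f (fvs.span B)"
  shows "fvs.dim (f ` B) = fvs.dim B"
proof -
  have "fvs.span B \<inter> {v. f v = 0} = {0}"
    using inj module_hom.inj_on_iff_eq_0[OF f] fvs.span_zero module_hom.zero[OF f] by auto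
  then show ?thesis
    using rank_nullity[OF assms(1,2)] module_hom.span_image[OF f] fvs.dim_span
    by (metis add_0_right fvs_dim_singleton)
qed

section \<open>Column rank is at most row rank\<close>

definition delta :: "'c \<Rightarrow> 'c \<Rightarrow> 'a::field" where
  "delta c = (\<lambda>c'. if c' = c then 1 else 0)"

lemma in_span_delta:
  fixes f :: "'c \<Rightarrow> 'a::field"
  assumes "finite E" and "\<And>c. c \<notin> E \<Longrightarrow> f c = 0"
  shows "f \<in> fvs.span (delta ` E)"
proof -
  have "f = (\<Sum>e\<in>E. fscale (f e) (delta e))"
    using assms by (auto simp: fun_eq_iff fscale_def delta_def if_distrib cong: if_cong)
  also have "\<dots> \<in> fvs.span (delta ` E)"
    by (intro fvs.span_sum fvs.span_scale fvs.span_base) auto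
  finally show ?thesis .
qed

lemma inj_delta: "inj (delta :: 'c \<Rightarrow> 'c \<Rightarrow> 'a::field)"
  by (rule injI) (metis delta_def one_neq_zero)

lemma independent_delta: "fvs.independent (delta ` E :: ('c \<Rightarrow> 'a::field) set)"
  unfolding fvs.independent_explicit_finite_subsets
proof (intro allI impI ballI)
  fix T :: "('c \<Rightarrow> 'a) set" and u v
  assume T: "T \<subseteq> delta ` E" "finite T" "(\<Sum>v\<in>T. fscale (u v) v) = 0" and "v \<in> T"
  then obtain c where c: "v = delta c"
    by blast
  have delta_c: "w c = (if w = v then 1 else 0)" if "w \<in> T" for w
    using that T(1) c inj_delta by (auto simp: delta_def dest: injD)
  have "(\<Sum>w\<in>T. u w * w c) = (\<Sum>w\<in>T. if w = v then u w else 0)"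
  proof (rule sum.cong[OF refl])
    fix w assume "w \<in> T"
    then show "u w * w c = (if w = v then u w else 0)"
      using delta_c[of w] by simp
  qed
  then have "(\<Sum>w\<in>T. fscale (u w) w) c = u v"
    using T(2) \<open>v \<in> T\<close> by (simp add: fscale_def)
  with T(3) show "u v = 0"
    by simp
qed

lemma exists_nonzero_annihilator:
  fixes E :: "('c \<Rightarrow> 'a::field) set"
  assumes "finite C" and "finite E" and "card E < card C"
  obtains \<beta> where "\<beta> \<noteq> 0" and "\<And>c. c \<notin> C \<Longrightarrow> \<beta> c = 0"
    and "\<And>e. e \<in> E \<Longrightarrow> (\<Sum>c\<in>C. \<beta> c * e c) = 0"
proof -
  define L :: "('c \<Rightarrow> 'a) \<Rightarrow> ('c \<Rightarrow> 'a) \<Rightarrow> 'a" where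
    "L = (\<lambda>\<beta> e. if e \<in> E then (\<Sum>c\<in>C. \<beta> c * e c) else 0)"
  have L: "module_hom fscale fscale L"
    by (rule module_hom_fscaleI)
      (auto simp: L_def fscale_def fun_eq_iff sum.distrib sum_distrib_left algebra_simps)
  define D where "D = (delta ` C :: ('c \<Rightarrow> 'a) set)"
  have "finite D"
    using assms(1) by (simp add: D_def)
  have "fvs.dim (fvs.span D) = card C"
    using fvs.dim_eq_card_independent[OF independent_delta] card_image[OF inj_on_subset[OF inj_delta]]
    unfolding D_def by (metis fvs.dim_span subset_UNIV)
  have "L ` fvs.span D \<subseteq> fvs.span (delta ` E)"
    using assms(2) by (auto simp: L_def intro: in_span_delta)
  then have "fvs.dim (L ` fvs.span D) \<le> card (delta ` E :: (('c \<Rightarrow> 'a) \<Rightarrow> 'a) set)"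
    using assms(2) by (intro fvs.dim_le_card) auto
  also have "\<dots> \<le> card E"
    using assms(2) by (rule card_image_le)
  finally have "fvs.dim (fvs.span D \<inter> {v. L v = 0}) \<noteq> 0"
    using rank_nullity[OF L \<open>finite D\<close>] \<open>fvs.dim (fvs.span D) = card C\<close> assms(3) by linarith
  then have "\<not> fvs.span D \<inter> {v. L v = 0} \<subseteq> {0}"
    using dim_subset_finite[of "{0}" "fvs.span D \<inter> {v. L v = 0}"] by (auto simp: fvs_dim_singleton)
  then obtain \<beta> where \<beta>: "\<beta> \<in> fvs.span D" "L \<beta> = 0" "\<beta> \<noteq> 0"
    by blast
  have "fvs.span D \<subseteq> {f. \<forall>c. c \<notin> C \<longrightarrow> f c = 0}"
    by (intro fvs.span_minimal) (auto simp: fvs.subspace_def fscale_def D_def delta_def)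
  then have "\<And>c. c \<notin> C \<Longrightarrow> \<beta> c = 0"
    using \<beta>(1) by blast
  moreover have "\<And>e. e \<in> E \<Longrightarrow> (\<Sum>c\<in>C. \<beta> c * e c) = 0"
    using \<beta>(2) by (metis L_def zero_fun_def)
  ultimately show thesis
    using that \<beta>(3) by blast
qed

text \<open>With more independent columns than rows in a basis \<open>E\<close> of the row space, some nontrivial
  combination of these columns vanishes at every element of \<open>E\<close>, hence at every row.\<close>

lemma dim_columns_le_dim_rows:
  fixes G :: "'r \<Rightarrow> 'c \<Rightarrow> 'a::field"
  assumes "finite W" and "range G \<subseteq> fvs.span W"
    and "finite W'" and "range (\<lambda>c r. G r c) \<subseteq> fvs.span W'"
  shows "fvs.dim (range (\<lambda>c r. G r c)) \<le> fvs.dim (range G)"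
proof (rule ccontr)
  assume less: "\<not> ?thesis"
  obtain Bc where Bc: "Bc \<subseteq> range (\<lambda>c r. G r c)" "fvs.independent Bc" "finite Bc"
    "card Bc = fvs.dim (range (\<lambda>c r. G r c))"
    using finite_basis_of_subset_span[OF assms(3,4)] by metis
  obtain E where E: "E \<subseteq> range G" "range G \<subseteq> fvs.span E" "finite E" "card E = fvs.dim (range G)"
    using finite_basis_of_subset_span[OF assms(1,2)] by metis
  have "\<forall>b\<in>Bc. \<exists>c. (\<lambda>r. G r c) = b"
    using Bc(1) by blast
  from bchoice[OF this] obtain sel where sel: "\<forall>b\<in>Bc. (\<lambda>r. G r (sel b)) = b" ..
  then have sel_apply: "G r (sel b) = b r" if "b \<in> Bc" for r b
    using that by metis
  have inj_sel: "inj_on sel Bc"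
    using sel by (metis inj_onI)
  have "card E < card (sel ` Bc)"
    using Bc(4) E(4) less card_image[OF inj_sel] by simp
  then obtain \<beta> where \<beta>: "\<beta> \<noteq> 0" "\<And>c. c \<notin> sel ` Bc \<Longrightarrow> \<beta> c = 0"
    "\<And>e. e \<in> E \<Longrightarrow> (\<Sum>c\<in>sel ` Bc. \<beta> c * e c) = 0"
    using exists_nonzero_annihilator[OF finite_imageI[OF Bc(3)] E(3)] by blast
  have "fvs.span E \<subseteq> {R. (\<Sum>c\<in>sel ` Bc. \<beta> c * R c) = 0}"
    using \<beta>(3) by (intro fvs.span_minimal)
      (auto simp: fvs.subspace_def fscale_def sum.distrib algebra_simps sum_distrib_left[symmetric])
  then have rows: "(\<Sum>c\<in>sel ` Bc. \<beta> c * G r c) = 0" for r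
    using E(2) by blast
  have "(\<Sum>b\<in>Bc. fscale (\<beta> (sel b)) b) = (\<lambda>r. \<Sum>c\<in>sel ` Bc. \<beta> c * G r c)"
    by (simp add: sum.reindex[OF inj_sel] fscale_def fun_eq_iff sel_apply cong: sum.cong)
  then have "\<beta> (sel b) = 0" if "b \<in> Bc" for b
    using fvs.independentD[OF Bc(2,3) subset_refl] rows that by (simp add: zero_fun_def)
  then have "\<beta> = 0"
    using \<beta>(2) by (metis image_iff zero_fun_def ext)
  with \<beta>(1) show False ..
qed

section \<open>Families of tensors with two factors\<close>

definition tensor2 :: "('k \<Rightarrow> 'x \<Rightarrow> 'a) \<Rightarrow> ('k \<Rightarrow> 'y \<Rightarrow> 'a) \<Rightarrow> 'k \<Rightarrow> 'x \<times> 'y \<Rightarrow> 'a::field" where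
  "tensor2 u w k = (\<lambda>(x, y). u k x * w k y)"

lemma tensor2_apply [simp]: "tensor2 u w k (x, y) = u k x * w k y"
  by (simp add: tensor2_def)

lemma tensor2_nonzero: "u k \<noteq> 0 \<Longrightarrow> w k \<noteq> 0 \<Longrightarrow> tensor2 u w k \<noteq> 0"
proof -
  assume "u k \<noteq> 0" "w k \<noteq> 0"
  then obtain x y where "u k x \<noteq> 0" "w k y \<noteq> 0"
    by (auto simp: fun_eq_iff)
  then have "tensor2 u w k (x, y) \<noteq> 0"
    by simp
  then show ?thesis
    by (auto simp: fun_eq_iff)
qed

lemma row_in_span_tensor2:
  fixes u :: "'k \<Rightarrow> 'x \<Rightarrow> 'a::field"
  assumes "g \<in> fvs.span (tensor2 u w ` P)"
  shows "(\<lambda>y. g (x, y)) \<in> fvs.span (w ` P)"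
proof (rule module_hom_in_span[OF _ assms])
  show "module_hom fscale fscale (\<lambda>g y. g (x, y) :: 'a)"
    by (rule module_hom_fscaleI) (auto simp: fscale_def)
  have "(\<lambda>y. tensor2 u w k (x, y)) \<in> fvs.span (w ` P)" if "k \<in> P" for k
  proof -
    have "(\<lambda>y. tensor2 u w k (x, y)) = fscale (u k x) (w k)"
      by (simp add: fscale_def fun_eq_iff)
    then show ?thesis
      using that by (simp add: fvs.span_scale fvs.span_base)
  qed
  then show "(\<lambda>g y. g (x, y)) ` tensor2 u w ` P \<subseteq> fvs.span (w ` P)"
    by auto
qed

lemma column_in_span_tensor2:
  fixes u :: "'k \<Rightarrow> 'x \<Rightarrow> 'a::field"
  assumes "g \<in> fvs.span (tensor2 u w ` P)"
  shows "(\<lambda>x. g (x, y)) \<in> fvs.span (u ` P)"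
proof (rule module_hom_in_span[OF _ assms])
  show "module_hom fscale fscale (\<lambda>g x. g (x, y) :: 'a)"
    by (rule module_hom_fscaleI) (auto simp: fscale_def)
  have "(\<lambda>x. tensor2 u w k (x, y)) \<in> fvs.span (u ` P)" if "k \<in> P" for k
  proof -
    have "(\<lambda>x. tensor2 u w k (x, y)) = fscale (w k y) (u k)"
      by (simp add: fscale_def fun_eq_iff mult.commute)
    then show ?thesis
      using that by (simp add: fvs.span_scale fvs.span_base)
  qed
  then show "(\<lambda>g x. g (x, y)) ` tensor2 u w ` P \<subseteq> fvs.span (u ` P)"
    by auto
qed

text \<open>The matrices \<open>g P\<close> (rows indexed by \<open>'x\<close>, columns by \<open>'y\<close>) placed side by side.\<close>

definition block_matrix :: "('p \<Rightarrow> 'x \<times> 'y \<Rightarrow> 'a) \<Rightarrow> 'p set \<Rightarrow> 'x \<Rightarrow> 'p \<times> 'y \<Rightarrow> 'a::field" where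
  "block_matrix g I = (\<lambda>x (P, y). if P \<in> I then g P (x, y) else 0)"

definition block_embed :: "'p \<Rightarrow> ('y \<Rightarrow> 'a) \<Rightarrow> 'p \<times> 'y \<Rightarrow> 'a::zero" where
  "block_embed P v = (\<lambda>(Q, y). if Q = P then v y else 0)"

lemma module_hom_block_embed: "module_hom fscale fscale (block_embed P :: ('y \<Rightarrow> 'a::field) \<Rightarrow> _)"
  by (rule module_hom_fscaleI) (auto simp: block_embed_def fscale_def fun_eq_iff)

lemma rows_block_matrix_in_span:
  fixes u :: "'k \<Rightarrow> 'x \<Rightarrow> 'a::field" and w :: "'k \<Rightarrow> 'y \<Rightarrow> 'a"
  assumes "finite I" and g: "\<And>P. P \<in> I \<Longrightarrow> g P \<in> fvs.span (tensor2 u w ` P)"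
  shows "range (block_matrix g I) \<subseteq> fvs.span (\<Union>P\<in>I. block_embed P ` w ` P)"
proof -
  have row: "block_matrix g I x = (\<Sum>P\<in>I. block_embed P (\<lambda>y. g P (x, y)))" for x
    using assms(1) by (simp add: fun_eq_iff block_matrix_def block_embed_def sum.delta' split: prod.split)
  have "block_embed P (\<lambda>y. g P (x, y)) \<in> fvs.span (\<Union>P\<in>I. block_embed P ` w ` P)" if "P \<in> I" for P x
  proof (rule module_hom_in_span[OF module_hom_block_embed row_in_span_tensor2[OF g[OF that]]])
    show "block_embed P ` w ` P \<subseteq> fvs.span (\<Union>P\<in>I. block_embed P ` w ` P)"
      using that fvs.span_superset[of "\<Union>P\<in>I. block_embed P ` w ` P"] by blast
  qed
  then show ?thesis
    unfolding row by (auto intro: fvs.span_sum)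
qed

text \<open>Summing the blocks maps each row of the block matrix to a multiple of \<open>w e\<close> and maps
  the direct sum of the spans of the \<open>w ` P\<close> onto the span of \<open>w ` \<Union>I\<close>; rank--nullity
  compares the two kernels.\<close>

lemma dim_rows_block_matrix_le:
  fixes u :: "'k \<Rightarrow> 'x \<Rightarrow> 'a::field" and w :: "'k \<Rightarrow> 'y \<Rightarrow> 'a"
  assumes "finite I" and "\<And>P. P \<in> I \<Longrightarrow> finite P"
    and g: "\<And>P. P \<in> I \<Longrightarrow> g P \<in> fvs.span (tensor2 u w ` P)"
    and sum: "(\<Sum>P\<in>I. g P) = tensor2 u w e"
  shows "fvs.dim (range (block_matrix g I)) + fvs.dim (w ` \<Union>I) \<le> 1 + (\<Sum>P\<in>I. fvs.dim (w ` P))"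
proof -
  define W where "W = (\<Union>P\<in>I. block_embed P ` w ` P)"
  have "finite W"
    using assms(1,2) by (auto simp: W_def)
  have rows: "range (block_matrix g I) \<subseteq> fvs.span W"
    unfolding W_def using assms(1) g by (rule rows_block_matrix_in_span)
  define \<Sigma> :: "('k set \<times> 'y \<Rightarrow> 'a) \<Rightarrow> 'y \<Rightarrow> 'a" where "\<Sigma> = (\<lambda>R y. \<Sum>P\<in>I. R (P, y))"
  have \<Sigma>: "module_hom fscale fscale \<Sigma>"
    by (rule module_hom_fscaleI) (auto simp: \<Sigma>_def fscale_def fun_eq_iff sum.distrib sum_distrib_left)
  have \<Sigma>_row: "\<Sigma> (block_matrix g I x) = fscale (u e x) (w e)" for x
    using fun_cong[OF sum, of "(x, _)"] by (simp add: \<Sigma>_def block_matrix_def fscale_def fun_eq_iff)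
  have \<Sigma>_embed: "\<Sigma> (block_embed P v) = v" if "P \<in> I" for P v
    using that assms(1) by (simp add: \<Sigma>_def block_embed_def fun_eq_iff)
  have dim_W: "fvs.dim W \<le> (\<Sum>P\<in>I. fvs.dim (w ` P))"
  proof -
    have "fvs.dim W \<le> (\<Sum>P\<in>I. fvs.dim (block_embed P ` w ` P))"
      unfolding W_def using assms(1,2) by (intro dim_UN_le) auto
    also have "\<dots> \<le> (\<Sum>P\<in>I. fvs.dim (w ` P))"
      using assms(2) by (intro sum_mono dim_image_le[OF module_hom_block_embed]) auto
    finally show ?thesis .
  qed
  have "w ` \<Union>I \<subseteq> \<Sigma> ` fvs.span W"
  proof
    fix z assume "z \<in> w ` \<Union>I"
    then obtain P k where "P \<in> I" "k \<in> P" "z = w k"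
      by blast
    then have "block_embed P (w k) \<in> fvs.span W" and "\<Sigma> (block_embed P (w k)) = z"
      using \<Sigma>_embed unfolding W_def by (auto intro: fvs.span_base)
    then show "z \<in> \<Sigma> ` fvs.span W"
      by (metis image_eqI)
  qed
  moreover have "\<Sigma> ` fvs.span W \<subseteq> fvs.span (\<Sigma> ` W)"
    using module_hom.span_image[OF \<Sigma>] by simp
  ultimately have dim_w: "fvs.dim (w ` \<Union>I) \<le> fvs.dim (\<Sigma> ` fvs.span W)"
    using \<open>finite W\<close> fvs.span_superset[of "\<Sigma> ` fvs.span W"]
    by (intro dim_mono_finite[of "\<Sigma> ` W"]) blast+
  obtain B where B: "B \<subseteq> range (block_matrix g I)" "fvs.independent B"
    "range (block_matrix g I) \<subseteq> fvs.span B" "finite B" "card B = fvs.dim (range (block_matrix g I))"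
    using finite_basis_of_subset_span[OF \<open>finite W\<close> rows] by metis
  have "\<Sigma> ` B \<subseteq> fvs.span {w e}"
  proof
    fix z assume "z \<in> \<Sigma> ` B"
    then obtain x where "z = \<Sigma> (block_matrix g I x)"
      using B(1) by blast
    then show "z \<in> fvs.span {w e}"
      by (simp add: \<Sigma>_row fvs.span_scale fvs.span_base)
  qed
  then have "\<Sigma> ` fvs.span B \<subseteq> fvs.span {w e}"
    using module_hom.span_image[OF \<Sigma>, of B] span_subset_spanI by metis
  then have "fvs.dim (\<Sigma> ` fvs.span B) \<le> 1"
    using dim_mono_finite[of "{w e}" "{w e}" "\<Sigma> ` fvs.span B"] fvs.span_superset[of "{w e}"]
    by (simp add: fvs_dim_singleton split: if_splits)
  moreover have "fvs.span B \<subseteq> fvs.span W"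
    using B(1) rows span_subset_spanI by blast
  then have "fvs.dim (fvs.span B \<inter> {v. \<Sigma> v = 0}) \<le> fvs.dim (fvs.span W \<inter> {v. \<Sigma> v = 0})"
  proof (intro dim_mono_finite[of W])
    show "fvs.span B \<inter> {v. \<Sigma> v = 0} \<subseteq> fvs.span (fvs.span W \<inter> {v. \<Sigma> v = 0})"
      using \<open>fvs.span B \<subseteq> fvs.span W\<close> fvs.span_superset[of "fvs.span W \<inter> {v. \<Sigma> v = 0}"]
      by blast
  qed (use \<open>finite W\<close> in auto)
  moreover have "fvs.dim (range (block_matrix g I)) = fvs.dim (fvs.span B)"
    using B(5) fvs.dim_span_eq_card_independent[OF B(2)] by simp
  ultimately show ?thesis
    using rank_nullity[OF \<Sigma> B(4)] rank_nullity[OF \<Sigma> \<open>finite W\<close>] dim_W dim_w fvs.dim_span[of W]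
    by linarith
qed

lemma columns_block_matrix_in_span:
  fixes u :: "'k \<Rightarrow> 'x \<Rightarrow> 'a::field" and w :: "'k \<Rightarrow> 'y \<Rightarrow> 'a"
  assumes g: "\<And>P. P \<in> I \<Longrightarrow> g P \<in> fvs.span (tensor2 u w ` P)"
  shows "range (\<lambda>c x. block_matrix g I x c) \<subseteq> fvs.span (u ` \<Union>I)"
proof
  fix z assume "z \<in> range (\<lambda>c x. block_matrix g I x c)"
  then obtain P y where z: "z = (\<lambda>x. block_matrix g I x (P, y))"
    by auto
  show "z \<in> fvs.span (u ` \<Union>I)"
  proof (cases "P \<in> I")
    case True
    then have "z \<in> fvs.span (u ` P)"
      using z column_in_span_tensor2[OF g[OF True]] by (simp add: block_matrix_def)
    moreover have "fvs.span (u ` P) \<subseteq> fvs.span (u ` \<Union>I)"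
      using True by (intro fvs.span_mono) blast
    ultimately show ?thesis
      by blast
  next
    case False
    then have "z = 0"
      by (simp add: z block_matrix_def fun_eq_iff)
    then show ?thesis
      by (simp add: fvs.span_zero)
  qed
qed

text \<open>Every nonzero block contributes a nonzero column space inside the span of its
  \<open>u ` P\<close>; by the Grassmann-type inequality these overlaps save \<open>card I\<close> dimensions.\<close>

lemma dim_columns_block_matrix_ge:
  fixes u :: "'k \<Rightarrow> 'x \<Rightarrow> 'a::field" and w :: "'k \<Rightarrow> 'y \<Rightarrow> 'a"
  assumes "finite I" and "\<And>P. P \<in> I \<Longrightarrow> finite P"
    and g: "\<And>P. P \<in> I \<Longrightarrow> g P \<in> fvs.span (tensor2 u w ` P)"
    and nonzero: "\<And>P. P \<in> I \<Longrightarrow> g P \<noteq> 0"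
  shows "fvs.dim (u ` \<Union>I) + card I
    \<le> fvs.dim (range (\<lambda>c x. block_matrix g I x c)) + (\<Sum>P\<in>I. fvs.dim (u ` P))"
proof -
  let ?Col = "range (\<lambda>c x. block_matrix g I x c)"
  define CP where "CP P = range (\<lambda>y x. g P (x, y))" for P
  have fin_u: "finite (u ` P)" if "P \<in> I" for P
    using assms(2)[OF that] by simp
  have CP_Col: "CP P \<subseteq> ?Col" if "P \<in> I" for P
  proof
    fix z assume "z \<in> CP P"
    then obtain y where "z = (\<lambda>x. g P (x, y))"
      by (auto simp: CP_def)
    then have "z = (\<lambda>x. block_matrix g I x (P, y))"
      using that by (simp add: block_matrix_def)
    then show "z \<in> ?Col"
      by blast
  qed
  have CP_span: "CP P \<subseteq> fvs.span (u ` P)" if "P \<in> I" for P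
    using column_in_span_tensor2[OF g[OF that]] by (auto simp: CP_def)
  have CP_nonzero: "1 \<le> fvs.dim (CP P)" if P: "P \<in> I" for P
  proof -
    obtain x y where "g P (x, y) \<noteq> 0"
      using nonzero[OF P] by (metis fun_eq_iff surj_pair zero_fun_def)
    then have "(\<lambda>x'. g P (x', y)) \<noteq> 0" and "(\<lambda>x'. g P (x', y)) \<in> CP P"
      by (auto simp: CP_def fun_eq_iff)
    then show ?thesis
      using one_le_dim_if_nonzero_mem[OF fin_u[OF P] CP_span[OF P]] by blast
  qed
  have "finite (u ` \<Union>I)"
    using assms(1,2) by simp
  then obtain Bc where Bc: "fvs.independent Bc" "?Col \<subseteq> fvs.span Bc" "finite Bc" "card Bc = fvs.dim ?Col"
    using finite_basis_of_subset_span[OF _ columns_block_matrix_in_span[OF g]] by metis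
  have "fvs.dim (u ` \<Union>I) \<le> fvs.dim (Bc \<union> (\<Union>P\<in>I. u ` P))"
    using assms(1,2) Bc(3) by (intro dim_subset_finite) auto
  also have "\<dots> + (\<Sum>P\<in>I. fvs.dim (CP P)) \<le> fvs.dim Bc + (\<Sum>P\<in>I. fvs.dim (u ` P))"
    using CP_Col CP_span Bc(2,3) fin_u assms(1) by (intro dim_UN_add_sum_dim_le) blast+
  finally have "fvs.dim (u ` \<Union>I) + (\<Sum>P\<in>I. fvs.dim (CP P)) \<le> fvs.dim ?Col + (\<Sum>P\<in>I. fvs.dim (u ` P))"
    using Bc(4) fvs.dim_eq_card_independent[OF Bc(1)] by simp
  moreover have "card I \<le> (\<Sum>P\<in>I. fvs.dim (CP P))"
    using sum_mono[of I "\<lambda>_. 1" "\<lambda>P. fvs.dim (CP P)"] CP_nonzero by simp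
  ultimately show ?thesis
    by linarith
qed

text \<open>Merging the blocks of \<open>I\<close> loses at most one dimension in the factors: compare the row
  rank and the column rank of the block matrix of the \<open>g P\<close>.\<close>

lemma dim_factors_merge_le:
  fixes u :: "'k \<Rightarrow> 'x \<Rightarrow> 'a::field" and w :: "'k \<Rightarrow> 'y \<Rightarrow> 'a"
  assumes "finite I" and "\<And>P. P \<in> I \<Longrightarrow> finite P"
    and "\<And>P. P \<in> I \<Longrightarrow> g P \<in> fvs.span (tensor2 u w ` P)"
    and "\<And>P. P \<in> I \<Longrightarrow> g P \<noteq> 0"
    and "(\<Sum>P\<in>I. g P) = tensor2 u w e"
  shows "fvs.dim (u ` \<Union>I) + fvs.dim (w ` \<Union>I) + card I
    \<le> (\<Sum>P\<in>I. fvs.dim (u ` P) + fvs.dim (w ` P)) + 1"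
proof -
  have "fvs.dim (range (\<lambda>c x. block_matrix g I x c)) \<le> fvs.dim (range (block_matrix g I))"
  proof (rule dim_columns_le_dim_rows[where W = "\<Union>P\<in>I. block_embed P ` w ` P" and W' = "u ` \<Union>I"])
    show "range (block_matrix g I) \<subseteq> fvs.span (\<Union>P\<in>I. block_embed P ` w ` P)"
      by (rule rows_block_matrix_in_span[OF assms(1,3)])
    show "range (\<lambda>c x. block_matrix g I x c) \<subseteq> fvs.span (u ` \<Union>I)"
      by (rule columns_block_matrix_in_span) (rule assms(3))
  qed (use assms(1,2) in auto)
  with dim_rows_block_matrix_le[OF assms(1,2,3,5)] dim_columns_block_matrix_ge[OF assms(1-4)] show ?thesis
    by (simp add: sum.distrib)
qed

lemma factors_in_span_if_tensor2_in_span: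
  fixes u :: "'k \<Rightarrow> 'x \<Rightarrow> 'a::field" and w :: "'k \<Rightarrow> 'y \<Rightarrow> 'a"
  assumes "tensor2 u w e \<in> fvs.span (tensor2 u w ` A)" and "u e \<noteq> 0" and "w e \<noteq> 0"
  shows "u e \<in> fvs.span (u ` A)" and "w e \<in> fvs.span (w ` A)"
proof -
  obtain x y where "u e x \<noteq> 0" "w e y \<noteq> 0"
    using assms(2,3) by (auto simp: fun_eq_iff)
  have "(\<lambda>x. tensor2 u w e (x, y)) = fscale (w e y) (u e)"
    by (simp add: fscale_def fun_eq_iff mult.commute)
  then show "u e \<in> fvs.span (u ` A)"
    using column_in_span_tensor2[OF assms(1), of y] \<open>w e y \<noteq> 0\<close> in_span_if_scale_in_span by metis
  have "(\<lambda>y. tensor2 u w e (x, y)) = fscale (u e x) (w e)"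
    by (simp add: fscale_def fun_eq_iff)
  then show "w e \<in> fvs.span (w ` A)"
    using row_in_span_tensor2[OF assms(1), of x] \<open>u e x \<noteq> 0\<close> in_span_if_scale_in_span by metis
qed

lemma partition_on_Diff_Union:
  assumes "partition_on K PP" and "I \<subseteq> PP"
  shows "partition_on (K - \<Union>I) (PP - I)"
proof (rule partition_onI)
  have disj: "P \<inter> Q = {}" if "P \<in> PP" "Q \<in> PP" "P \<noteq> Q" for P Q
    using partition_onD2[OF assms(1)] that by (auto simp: disjoint_def)
  show "\<Union>(PP - I) = K - \<Union>I"
    using assms(2) partition_onD1[OF assms(1)] disj by blast
qed (use partition_onD2[OF assms(1)] partition_onD3[OF assms(1)] in \<open>auto simp: disjoint_def disjnt_def\<close>)

lemma partition_on_insert_Union: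
  assumes "partition_on K PP" and "I \<subseteq> PP" and "e \<notin> K"
  shows "partition_on (insert e K) (insert (insert e (\<Union>I)) (PP - I))"
proof (subst partition_on_insert)
  show "disjnt (insert e (\<Union>I)) (\<Union>(PP - I))"
    using partition_onD1[OF partition_on_Diff_Union[OF assms(1,2)], symmetric] assms(3)
    by (auto simp: disjnt_def)
  have "insert e K - insert e (\<Union>I) = K - \<Union>I"
    using assms(3) by auto
  then show "partition_on (insert e K - insert e (\<Union>I)) (PP - I)
      \<and> insert e (\<Union>I) \<subseteq> insert e K \<and> insert e (\<Union>I) \<noteq> {}"
    using partition_on_Diff_Union[OF assms(1,2)] assms(2) partition_onD1[OF assms(1)] by auto
qed

text \<open>A partition of \<open>K\<close> whose blocks span a direct sum and which satisfies the inequality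
  that the construction below propagates.\<close>

definition direct_partition :: "('k \<Rightarrow> 'x \<Rightarrow> 'a::field) \<Rightarrow> ('k \<Rightarrow> 'y \<Rightarrow> 'a) \<Rightarrow> 'k set \<Rightarrow> 'k set set \<Rightarrow> bool"
  where "direct_partition u w K PP \<longleftrightarrow> partition_on K PP
    \<and> fvs.dim (tensor2 u w ` K) = (\<Sum>P\<in>PP. fvs.dim (tensor2 u w ` P))
    \<and> (\<Sum>P\<in>PP. fvs.dim (u ` P) + fvs.dim (w ` P)) \<le> fvs.dim (tensor2 u w ` K) + card PP"

lemma direct_partition_insert_not_in_span:
  fixes u :: "'k \<Rightarrow> 'x \<Rightarrow> 'a::field" and w :: "'k \<Rightarrow> 'y \<Rightarrow> 'a"
  assumes "direct_partition u w K PP" and "finite K" and "e \<notin> K" and "u e \<noteq> 0" and "w e \<noteq> 0"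
    and "tensor2 u w e \<notin> fvs.span (tensor2 u w ` K)"
  shows "direct_partition u w (insert e K) (insert {e} PP)"
proof -
  have PP: "partition_on K PP" "finite PP"
    using assms(1,2) finite_elements by (auto simp: direct_partition_def)
  have "{e} \<notin> PP"
    using assms(3) partition_onD1[OF PP(1)] by blast
  have "fvs.dim (tensor2 u w ` insert e K) = fvs.dim (tensor2 u w ` K) + 1"
    using dim_insert_not_in_span[OF _ assms(6)] assms(2) by simp
  moreover have "partition_on (insert e K) (insert {e} PP)"
    using PP(1) assms(3) partition_onD1[OF PP(1)] by (subst partition_on_insert) (auto simp: disjnt_def)
  ultimately show ?thesis
    using assms(1,4,5) PP(2) \<open>{e} \<notin> PP\<close> tensor2_nonzero[of u e w]
    by (simp add: direct_partition_def fvs_dim_singleton)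
qed

text \<open>If \<open>tensor2 u w e\<close> lies in the span, its decomposition along the direct sum involves
  some blocks \<open>I\<close>; merging them with \<open>e\<close> keeps the partition direct, and
  \<open>dim_factors_merge_le\<close> pays for the loss of \<open>card I - 1\<close> blocks.\<close>

lemma direct_partition_insert_in_span:
  fixes u :: "'k \<Rightarrow> 'x \<Rightarrow> 'a::field" and w :: "'k \<Rightarrow> 'y \<Rightarrow> 'a"
  assumes "direct_partition u w K PP" and "finite K" and "e \<notin> K" and "u e \<noteq> 0" and "w e \<noteq> 0"
    and in_span: "tensor2 u w e \<in> fvs.span (tensor2 u w ` K)"
  shows "\<exists>PP'. direct_partition u w (insert e K) PP'"
proof -
  let ?T = "tensor2 u w" and ?f = "\<lambda>P. fvs.dim (u ` P) + fvs.dim (w ` P)"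
  have part: "partition_on K PP"
    and additive: "fvs.dim (\<Union>P\<in>PP. ?T ` P) = (\<Sum>P\<in>PP. fvs.dim (?T ` P))"
    and bound: "(\<Sum>P\<in>PP. ?f P) \<le> fvs.dim (?T ` K) + card PP"
    using assms(1) partition_onD1[of K PP] by (simp_all add: direct_partition_def image_Union)
  have "finite PP"
    using finite_elements[OF assms(2) part] .
  have fin_P: "finite P" if "P \<in> PP" for P
    using that assms(2) partition_onD1[OF part] by (metis Union_upper finite_subset)
  have "?T e \<in> fvs.span (\<Union>P\<in>PP. ?T ` P)"
    using in_span partition_onD1[OF part] by (simp add: image_Union)
  then obtain I g where I: "I \<subseteq> PP" and g: "\<And>P. P \<in> I \<Longrightarrow> g P \<in> fvs.span (?T ` P)"
    and nonzero: "\<And>P. P \<in> I \<Longrightarrow> g P \<noteq> 0" and sum_I: "?T e = (\<Sum>P\<in>I. g P)"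
    using span_UN_decompose_nonzero[OF \<open>finite PP\<close>] by blast
  have "finite I"
    using I \<open>finite PP\<close> by (rule finite_subset)
  have "I \<noteq> {}"
    using sum_I tensor2_nonzero[of u e w] assms(4,5) by auto
  define M where "M = insert e (\<Union>I)"
  have "M \<notin> PP - I"
    using assms(3) partition_onD1[OF part] by (auto simp: M_def)
  have T_e: "?T e \<in> fvs.span (?T ` \<Union>I)"
    using sum_in_span_UN[of I g "\<lambda>P. ?T ` P", OF g] sum_I by (simp add: image_Union)
  have "fvs.dim (?T ` M) = (\<Sum>P\<in>I. fvs.dim (?T ` P))"
    using dim_UN_eq_sum_subset[OF \<open>finite PP\<close> _ additive I] fin_P dim_insert_in_span[OF T_e]
    by (simp add: M_def image_Union)
  then have dim_T: "fvs.dim (?T ` insert e K) = fvs.dim (?T ` M) + (\<Sum>P\<in>PP - I. fvs.dim (?T ` P))"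
    using dim_insert_in_span[OF in_span] additive partition_onD1[OF part] sum.subset_diff[OF I \<open>finite PP\<close>]
    by (simp add: add.commute image_Union)
  have "fvs.dim (u ` \<Union>I) + fvs.dim (w ` \<Union>I) + card I \<le> (\<Sum>P\<in>I. ?f P) + 1"
    using I fin_P g nonzero sum_I[symmetric] by (intro dim_factors_merge_le \<open>finite I\<close>) auto
  moreover have "?f M = fvs.dim (u ` \<Union>I) + fvs.dim (w ` \<Union>I)"
    using factors_in_span_if_tensor2_in_span[OF T_e assms(4,5)] by (simp add: M_def dim_insert_in_span)
  moreover have "(\<Sum>P\<in>PP. ?f P) = (\<Sum>P\<in>I. ?f P) + (\<Sum>P\<in>PP - I. ?f P)"
    using sum.subset_diff[OF I \<open>finite PP\<close>] by (simp add: add.commute)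
  moreover have "card (insert M (PP - I)) + card I = card PP + 1"
    using card_Diff_subset[OF \<open>finite I\<close> I] card_mono[OF \<open>finite PP\<close> I] \<open>M \<notin> PP - I\<close> \<open>finite PP\<close>
    by simp
  moreover have "fvs.dim (?T ` insert e K) = fvs.dim (?T ` K)"
    using dim_insert_in_span[OF in_span] by simp
  ultimately have "?f M + (\<Sum>P\<in>PP - I. ?f P) \<le> fvs.dim (?T ` insert e K) + card (insert M (PP - I))"
    using bound by linarith
  then have "direct_partition u w (insert e K) (insert M (PP - I))"
    using partition_on_insert_Union[OF part I assms(3)] dim_T \<open>M \<notin> PP - I\<close> \<open>finite PP\<close>
    by (simp add: direct_partition_def M_def)
  then show ?thesis ..
qed

lemma exists_direct_partition:
  fixes u :: "'k \<Rightarrow> 'x \<Rightarrow> 'a::field" and w :: "'k \<Rightarrow> 'y \<Rightarrow> 'a"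
  assumes "finite K" and "\<And>k. k \<in> K \<Longrightarrow> u k \<noteq> 0 \<and> w k \<noteq> 0"
  shows "\<exists>PP. direct_partition u w K PP"
  using assms
proof (induction K rule: finite_induct)
  case empty
  have "direct_partition u w {} {}"
    by (simp add: direct_partition_def fvs_dim_empty partition_on_empty)
  then show ?case ..
next
  case (insert e K)
  then obtain PP where PP: "direct_partition u w K PP"
    by blast
  have nonzero: "u e \<noteq> 0" "w e \<noteq> 0"
    using insert.prems[of e] by (simp_all add: zero_fun_def)
  show ?case
  proof (cases "tensor2 u w e \<in> fvs.span (tensor2 u w ` K)")
    case True
    show ?thesis
      by (rule direct_partition_insert_in_span[OF PP insert.hyps(1,2) nonzero True])
  next
    case False
    have "direct_partition u w (insert e K) (insert {e} PP)"
      by (rule direct_partition_insert_not_in_span[OF PP insert.hyps(1,2) nonzero False])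
    then show ?thesis ..
  qed
qed

definition span_connected :: "('k \<Rightarrow> 'i \<Rightarrow> 'a::field) \<Rightarrow> 'k set \<Rightarrow> bool" where
  "span_connected T K \<longleftrightarrow>
    (\<forall>A. A \<subseteq> K \<longrightarrow> A \<noteq> {} \<longrightarrow> A \<noteq> K \<longrightarrow> fvs.span (T ` A) \<inter> fvs.span (T ` (K - A)) \<noteq> {0})"

text \<open>A connected family admits no direct partition with more than one block.\<close>

lemma span_connected_tensor2_dims:
  fixes u :: "'k \<Rightarrow> 'x \<Rightarrow> 'a::field" and w :: "'k \<Rightarrow> 'y \<Rightarrow> 'a"
  assumes "finite K" and "K \<noteq> {}" and "\<And>k. k \<in> K \<Longrightarrow> u k \<noteq> 0 \<and> w k \<noteq> 0"
    and connected: "span_connected (tensor2 u w) K"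
  shows "fvs.dim (u ` K) + fvs.dim (w ` K) \<le> fvs.dim (tensor2 u w ` K) + 1"
proof -
  let ?T = "tensor2 u w"
  obtain PP where PP: "direct_partition u w K PP"
    using exists_direct_partition[OF assms(1), of u w] assms(3) by blast
  then have part: "partition_on K PP"
    and additive: "fvs.dim (?T ` K) = (\<Sum>P\<in>PP. fvs.dim (?T ` P))"
    by (simp_all add: direct_partition_def)
  have "finite PP"
    using finite_elements[OF assms(1) part] .
  have K: "K = \<Union>PP"
    using partition_onD1[OF part] .
  have fin_T: "finite (?T ` P)" if "P \<in> PP" for P
    using that assms(1) K by (metis Union_upper finite_subset finite_imageI)
  have "PP = {K}"
  proof (rule ccontr)
    assume "PP \<noteq> {K}"
    moreover have "PP \<noteq> {}"
      using assms(2) K by blast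
    ultimately obtain P where P: "P \<in> PP" "P \<noteq> K"
      using K by blast
    have "P \<noteq> {}" "P \<subseteq> K"
      using partition_onD3[OF part] P(1) K by blast+
    have "K - P = \<Union>(PP - {P})"
      using partition_onD1[OF partition_on_Diff_Union[OF part, of "{P}"]] P(1) by simp
    then have "fvs.dim (?T ` (K - P)) = (\<Sum>Q\<in>PP - {P}. fvs.dim (?T ` Q))"
      using dim_UN_eq_sum_subset[OF \<open>finite PP\<close> fin_T _ Diff_subset] additive K
      by (simp add: image_Union)
    then have "fvs.dim (?T ` P \<union> ?T ` (K - P)) = fvs.dim (?T ` P) + fvs.dim (?T ` (K - P))"
      using additive sum.remove[OF \<open>finite PP\<close> P(1)] \<open>P \<subseteq> K\<close> by (simp add: Un_absorb1 image_Un[symmetric])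
    then have "fvs.span (?T ` P) \<inter> fvs.span (?T ` (K - P)) = {0}"
      using assms(1) by (intro span_Int_eq_zero_if_dim_Un_eq fin_T[OF P(1)]) simp_all
    moreover have "fvs.span (?T ` P) \<inter> fvs.span (?T ` (K - P)) \<noteq> {0}"
      using connected \<open>P \<noteq> {}\<close> \<open>P \<subseteq> K\<close> P(2) by (simp add: span_connected_def)
    ultimately show False
      by contradiction
  qed
  then show ?thesis
    using PP by (simp add: direct_partition_def)
qed

section \<open>Connected families of product tensors\<close>

text \<open>\<open>ptensor\<close> over an arbitrary set of factors, so that factors can be split off by
  induction.\<close>

definition prod_tensor :: "nat set \<Rightarrow> (nat \<Rightarrow> 'i \<Rightarrow> 'a) \<Rightarrow> (nat \<Rightarrow> 'i) \<Rightarrow> 'a::field" where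
  "prod_tensor J z = (\<lambda>idx. \<Prod>j\<in>J. z j (idx j))"

lemma prod_tensor_nonzero:
  assumes "finite J" and "\<And>j. j \<in> J \<Longrightarrow> z j \<noteq> 0"
  shows "prod_tensor J z \<noteq> 0"
proof -
  have "\<forall>j\<in>J. \<exists>x. z j x \<noteq> 0"
    using assms(2) by (auto simp: fun_eq_iff)
  then obtain idx where "\<forall>j\<in>J. z j (idx j) \<noteq> 0"
    by metis
  then have "prod_tensor J z idx \<noteq> 0"
    using assms(1) by (simp add: prod_tensor_def)
  then show ?thesis
    by (auto simp: fun_eq_iff)
qed

lemma span_connected_if_inj_on_image:
  assumes "module_hom fscale fscale f" and "inj_on f (fvs.span (T ` K))"
    and "span_connected (\<lambda>k. f (T k)) K"
  shows "span_connected T K"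
  unfolding span_connected_def
proof (intro allI impI notI)
  fix A assume A: "A \<subseteq> K" "A \<noteq> {}" "A \<noteq> K"
    and trivial: "fvs.span (T ` A) \<inter> fvs.span (T ` (K - A)) = {0}"
  have span_image: "fvs.span ((\<lambda>k. f (T k)) ` B) = f ` fvs.span (T ` B)" for B
    using module_hom.span_image[OF assms(1), of "T ` B"] by (simp add: image_image)
  obtain v where "v \<in> fvs.span ((\<lambda>k. f (T k)) ` A)" "v \<in> fvs.span ((\<lambda>k. f (T k)) ` (K - A))" "v \<noteq> 0"
    using assms(3) A fvs.span_zero unfolding span_connected_def by blast
  then obtain a b where a: "a \<in> fvs.span (T ` A)" "v = f a" and b: "b \<in> fvs.span (T ` (K - A))" "v = f b"
    unfolding span_image by blast
  have "a \<in> fvs.span (T ` K)" "b \<in> fvs.span (T ` K)"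
    using a(1) b(1) A(1) fvs.span_mono[of "T ` A" "T ` K"] fvs.span_mono[of "T ` (K - A)" "T ` K"] by blast+
  then have "a = b"
    using assms(2) a(2) b(2) by (auto dest: inj_onD)
  then have "a = 0"
    using trivial a(1) b(1) by blast
  with a(2) \<open>v \<noteq> 0\<close> show False
    using module_hom.zero[OF assms(1)] by simp
qed

lemma span_connected_tensor2_right:
  fixes u :: "'k \<Rightarrow> 'x \<Rightarrow> 'a::field" and w :: "'k \<Rightarrow> 'y \<Rightarrow> 'a"
  assumes "span_connected (tensor2 u w) K"
  shows "span_connected w K"
  unfolding span_connected_def
proof (intro allI impI notI)
  fix A assume A: "A \<subseteq> K" "A \<noteq> {}" "A \<noteq> K"
    and trivial: "fvs.span (w ` A) \<inter> fvs.span (w ` (K - A)) = {0}"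
  have "\<tau> = 0" if "\<tau> \<in> fvs.span (tensor2 u w ` A)" "\<tau> \<in> fvs.span (tensor2 u w ` (K - A))" for \<tau>
  proof -
    have "(\<lambda>y. \<tau> (x, y)) = 0" for x
      using row_in_span_tensor2[OF that(1), of x] row_in_span_tensor2[OF that(2), of x] trivial by blast
    then show ?thesis
      by (auto simp: fun_eq_iff)
  qed
  then have "fvs.span (tensor2 u w ` A) \<inter> fvs.span (tensor2 u w ` (K - A)) = {0}"
    using fvs.span_zero by blast
  moreover have "fvs.span (tensor2 u w ` A) \<inter> fvs.span (tensor2 u w ` (K - A)) \<noteq> {0}"
    using assms A by (simp add: span_connected_def)
  ultimately show False
    by contradiction
qed

text \<open>Identifying the two occurrences of the index \<open>j\<close> is injective on tensors whose second
  factors do not depend on \<open>idx j\<close>.\<close>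

lemma inj_on_span_tensor2_diagonal:
  fixes u :: "'k \<Rightarrow> 'i \<Rightarrow> 'a::field" and w :: "'k \<Rightarrow> (nat \<Rightarrow> 'i) \<Rightarrow> 'a"
  assumes "\<And>k idx c. k \<in> K \<Longrightarrow> w k (idx(j := c)) = w k idx"
  shows "inj_on (\<lambda>\<tau> idx. \<tau> (idx j, idx)) (fvs.span (tensor2 u w ` K))"
proof -
  let ?\<Theta> = "\<lambda>\<tau> idx. \<tau> (idx j, idx) :: 'a"
  have \<Theta>: "module_hom fscale fscale ?\<Theta>"
    by (rule module_hom_fscaleI) (auto simp: fscale_def)
  define V where "V = {\<tau> :: 'i \<times> (nat \<Rightarrow> 'i) \<Rightarrow> 'a. \<forall>x idx c. \<tau> (x, idx(j := c)) = \<tau> (x, idx)}"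
  have "fvs.subspace V"
    by (auto simp: fvs.subspace_def V_def fscale_def)
  moreover have "tensor2 u w ` K \<subseteq> V"
    using assms by (auto simp: V_def)
  ultimately have span_V: "fvs.span (tensor2 u w ` K) \<subseteq> V"
    by (intro fvs.span_minimal)
  have "\<forall>\<tau>\<in>fvs.span (tensor2 u w ` K). ?\<Theta> \<tau> = 0 \<longrightarrow> \<tau> = 0"
  proof (intro ballI impI)
    fix \<tau> assume "\<tau> \<in> fvs.span (tensor2 u w ` K)" and "?\<Theta> \<tau> = 0"
    then have "\<tau> \<in> V"
      using span_V by blast
    then have "\<tau> (x, idx) = ?\<Theta> \<tau> (idx(j := x))" for x idx
      by (simp add: V_def)
    then have "\<tau> (x, idx) = 0" for x idx
      using fun_cong[OF \<open>?\<Theta> \<tau> = 0\<close>, of "idx(j := x)"] by simp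
    then show "\<tau> = 0"
      by (simp add: fun_eq_iff)
  qed
  then show ?thesis
    by (simp add: module_hom.inj_on_iff_eq_0[OF \<Theta>])
qed

text \<open>Splitting off one factor \<open>j\<close> turns a connected family of product tensors into a
  connected family of tensors with two factors, to which \<open>span_connected_tensor2_dims\<close>
  applies.\<close>

lemma span_connected_prod_tensor_dims:
  fixes F :: "'k \<Rightarrow> nat \<Rightarrow> 'i \<Rightarrow> 'a::field"
  assumes "finite J" and "finite K" and "K \<noteq> {}" and "\<And>k j. k \<in> K \<Longrightarrow> j \<in> J \<Longrightarrow> F k j \<noteq> 0"
    and "span_connected (\<lambda>k. prod_tensor J (F k)) K"
  shows "(\<Sum>j\<in>J. fvs.dim ((\<lambda>k. F k j) ` K)) + 1 \<le> fvs.dim ((\<lambda>k. prod_tensor J (F k)) ` K) + card J"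
  using assms(1,4,5)
proof (induction J rule: finite_induct)
  case empty
  have "(\<lambda>k. prod_tensor {} (F k)) ` K = {\<lambda>_. 1}"
    using assms(3) by (auto simp: prod_tensor_def)
  then show ?case
    by (simp add: fvs_dim_singleton fun_eq_iff)
next
  case (insert j J)
  define u where "u = (\<lambda>k. F k j)"
  define w where "w = (\<lambda>k. prod_tensor J (F k))"
  let ?\<Theta> = "\<lambda>\<tau> idx. \<tau> (idx j, idx) :: 'a"
  have \<Theta>: "module_hom fscale fscale ?\<Theta>"
    by (rule module_hom_fscaleI) (auto simp: fscale_def)
  have \<Theta>_tensor2: "?\<Theta> (tensor2 u w k) = prod_tensor (insert j J) (F k)" for k
    using insert.hyps by (simp add: u_def w_def prod_tensor_def fun_eq_iff)
  have "w k (idx(j := c)) = w k idx" for k idx c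
    using insert.hyps(2) unfolding w_def prod_tensor_def by (intro prod.cong) auto
  then have inj: "inj_on ?\<Theta> (fvs.span (tensor2 u w ` K))"
    by (rule inj_on_span_tensor2_diagonal)
  have connected: "span_connected (tensor2 u w) K"
    using span_connected_if_inj_on_image[OF \<Theta> inj] insert.prems(2) \<Theta>_tensor2 by simp
  have "u k \<noteq> 0 \<and> w k \<noteq> 0" if "k \<in> K" for k
    using insert.prems(1)[OF that] insert.hyps(1) prod_tensor_nonzero[of J "F k"]
    by (simp add: u_def w_def zero_fun_def)
  then have "fvs.dim (u ` K) + fvs.dim (w ` K) \<le> fvs.dim (tensor2 u w ` K) + 1"
    by (rule span_connected_tensor2_dims[OF assms(2,3) _ connected])
  moreover have "fvs.dim ((\<lambda>k. prod_tensor (insert j J) (F k)) ` K) = fvs.dim (tensor2 u w ` K)"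
    using dim_image_eq_if_inj_on[OF \<Theta> _ inj] assms(2) \<Theta>_tensor2 by (simp add: image_image)
  moreover have "(\<Sum>j\<in>J. fvs.dim ((\<lambda>k. F k j) ` K)) + 1 \<le> fvs.dim (w ` K) + card J"
    using insert.IH insert.prems(1) span_connected_tensor2_right[OF connected] by (simp add: w_def)
  ultimately show ?case
    using insert.hyps by (simp add: u_def)
qed

section \<open>Minimal vanishing sums of product tensors\<close>

definition minimal_zero_sum :: "('k \<Rightarrow> 'v::comm_monoid_add) \<Rightarrow> 'k set \<Rightarrow> bool" where
  "minimal_zero_sum f B \<longleftrightarrow>
    (\<Sum>k\<in>B. f k) = 0 \<and> (\<forall>A. A \<subseteq> B \<longrightarrow> A \<noteq> {} \<longrightarrow> A \<noteq> B \<longrightarrow> (\<Sum>k\<in>A. f k) \<noteq> 0)"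

lemma exists_partition_minimal_zero_sum:
  fixes f :: "'k \<Rightarrow> 'v::ab_group_add"
  assumes "finite K" and "(\<Sum>k\<in>K. f k) = 0"
  shows "\<exists>BB. partition_on K BB \<and> (\<forall>B\<in>BB. minimal_zero_sum f B)"
  using assms
proof (induction "card K" arbitrary: K rule: less_induct)
  case less
  show ?case
  proof (cases "K = {} \<or> minimal_zero_sum f K")
    case True
    then have "partition_on K (if K = {} then {} else {K}) \<and> (\<forall>B\<in>(if K = {} then {} else {K}). minimal_zero_sum f B)"
      by (auto simp: partition_on_empty partition_on_space)
    then show ?thesis ..
  next
    case False
    then obtain A where A: "A \<subseteq> K" "A \<noteq> {}" "A \<noteq> K" "(\<Sum>k\<in>A. f k) = 0"
      using less.prems(2) by (auto simp: minimal_zero_sum_def)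
    have "finite A" "finite (K - A)"
      using A(1) less.prems(1) finite_subset by auto
    have "(\<Sum>k\<in>K - A. f k) = 0"
      using sum.subset_diff[OF A(1) less.prems(1), of f] less.prems(2) A(4) by simp
    have "card A < card K"
      using A(1,3) less.prems(1) by (intro psubset_card_mono) auto
    then obtain BA where BA: "partition_on A BA" "\<forall>B\<in>BA. minimal_zero_sum f B"
      using less.hyps \<open>finite A\<close> A(4) by blast
    have "card (K - A) < card K"
      using card_Diff_subset[OF \<open>finite A\<close> A(1)] card_gt_0_iff[of A] \<open>finite A\<close> A(2)
        \<open>card A < card K\<close> by linarith
    then obtain BB where BB: "partition_on (K - A) BB" "\<forall>B\<in>BB. minimal_zero_sum f B"
      using less.hyps \<open>finite (K - A)\<close> \<open>(\<Sum>k\<in>K - A. f k) = 0\<close> by blast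
    have "partition_on K (BA \<union> BB)"
      unfolding partition_on_def
    proof (intro conjI)
      show "\<Union>(BA \<union> BB) = K"
        using partition_onD1[OF BA(1)] partition_onD1[OF BB(1)] A(1) by auto
      show "disjoint (BA \<union> BB)"
        using partition_onD1[OF BA(1)] partition_onD1[OF BB(1)] partition_onD2[OF BA(1)]
          partition_onD2[OF BB(1)] by (intro disjoint_union) auto
      show "{} \<notin> BA \<union> BB"
        using partition_onD3[OF BA(1)] partition_onD3[OF BB(1)] by auto
    qed
    with BA(2) BB(2) show ?thesis
      by blast
  qed
qed

lemma span_connected_if_minimal_zero_sum:
  assumes "finite K" and "minimal_zero_sum (\<lambda>k. fscale (c k) (p k)) K"
  shows "span_connected p K"
  unfolding span_connected_def
proof (intro allI impI)
  fix A assume A: "A \<subseteq> K" "A \<noteq> {}" "A \<noteq> K"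
  define v where "v = (\<Sum>k\<in>A. fscale (c k) (p k))"
  have "v \<noteq> 0"
    using assms(2) A by (simp add: minimal_zero_sum_def v_def)
  have "v \<in> fvs.span (p ` A)"
    unfolding v_def by (intro fvs.span_sum fvs.span_scale fvs.span_base) auto
  have "(\<Sum>k\<in>K. fscale (c k) (p k)) = v + (\<Sum>k\<in>K - A. fscale (c k) (p k))"
    using sum.subset_diff[OF A(1) assms(1)] by (simp add: v_def add.commute)
  then have "v = - (\<Sum>k\<in>K - A. fscale (c k) (p k))"
    using assms(2) by (simp add: minimal_zero_sum_def eq_neg_iff_add_eq_0)
  also have "\<dots> \<in> fvs.span (p ` (K - A))"
    by (intro fvs.span_neg fvs.span_sum fvs.span_scale fvs.span_base) auto
  finally show "fvs.span (p ` A) \<inter> fvs.span (p ` (K - A)) \<noteq> {0}"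
    using \<open>v \<noteq> 0\<close> \<open>v \<in> fvs.span (p ` A)\<close> by blast
qed

lemma dim_add_one_le_card_if_zero_sum:
  assumes "finite K" and "k \<in> K" and "c k \<noteq> 0" and "(\<Sum>k\<in>K. fscale (c k) (p k)) = 0"
  shows "fvs.dim (p ` K) + 1 \<le> card K"
proof -
  have "fscale (c k) (p k) = - (\<Sum>k\<in>K - {k}. fscale (c k) (p k))"
    using assms(4) sum.remove[OF assms(1,2), of "\<lambda>k. fscale (c k) (p k)"]
    by (simp add: eq_neg_iff_add_eq_0)
  also have "\<dots> \<in> fvs.span (p ` (K - {k}))"
    by (intro fvs.span_neg fvs.span_sum fvs.span_scale fvs.span_base) auto
  finally have "p k \<in> fvs.span (p ` (K - {k}))"
    using assms(3) by (rule in_span_if_scale_in_span)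
  then have "fvs.dim (p ` K) = fvs.dim (p ` (K - {k}))"
    using dim_insert_in_span assms(2) by (metis image_insert insert_Diff)
  also have "\<dots> \<le> card (p ` (K - {k}))"
    using assms(1) by (intro fvs.dim_le_card') simp
  also have "\<dots> \<le> card (K - {k})"
    using assms(1) by (intro card_image_le) simp
  finally show ?thesis
    using assms(1,2) card_Diff1_less[of K k] by simp
qed

text \<open>Minimality makes the family connected, and the vanishing sum makes one tensor redundant,
  so \<open>span_connected_prod_tensor_dims\<close> bounds the factor dimensions by \<open>card K - 2\<close>.\<close>

lemma minimal_zero_sum_prod_tensor_dims:
  fixes F :: "'k \<Rightarrow> nat \<Rightarrow> 'i \<Rightarrow> 'a::field" and c :: "'k \<Rightarrow> 'a"
  assumes "finite J" and "finite K" and "K \<noteq> {}"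
    and "\<And>k j. k \<in> K \<Longrightarrow> j \<in> J \<Longrightarrow> F k j \<noteq> 0" and "\<And>k. k \<in> K \<Longrightarrow> c k \<noteq> 0"
    and minimal: "minimal_zero_sum (\<lambda>k. fscale (c k) (prod_tensor J (F k))) K"
  shows "(\<Sum>j\<in>J. fvs.dim ((\<lambda>k. F k j) ` K)) + 2 \<le> card K + card J"
proof -
  obtain k where "k \<in> K"
    using assms(3) by blast
  have "fvs.dim ((\<lambda>k. prod_tensor J (F k)) ` K) + 1 \<le> card K"
    using minimal assms(2,5) \<open>k \<in> K\<close>
    by (intro dim_add_one_le_card_if_zero_sum[of K k c]) (auto simp: minimal_zero_sum_def)
  moreover have "(\<Sum>j\<in>J. fvs.dim ((\<lambda>k. F k j) ` K)) + 1
      \<le> fvs.dim ((\<lambda>k. prod_tensor J (F k)) ` K) + card J"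
    using span_connected_if_minimal_zero_sum[OF assms(2) minimal]
    by (intro span_connected_prod_tensor_dims assms(1-4))
  ultimately show ?thesis
    by linarith
qed

section \<open>Counting balanced blocks\<close>

text \<open>Either the largest block has size \<open>t > s\<close>: there are at least \<open>\<lceil>M / t\<rceil>\<close> blocks, and
  its excess plus one for every other block is at least \<open>D + 1\<close>.  Or all blocks have size at
  most \<open>s\<close>: then there are at least \<open>\<lceil>M / s\<rceil> > D\<close> of them.\<close>

lemma sum_excess_lower_bound:
  fixes qf :: "'b \<Rightarrow> nat" and e :: "'b \<Rightarrow> int" and D :: int
  assumes "finite Bad" and "1 \<le> M" and "M \<le> (\<Sum>B\<in>Bad. qf B)" and "1 \<le> s"
    and "D + 1 \<le> \<lceil>real M / real s\<rceil>"
    and "\<And>B. B \<in> Bad \<Longrightarrow> 1 \<le> e B"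
    and "\<And>B. B \<in> Bad \<Longrightarrow> s + 1 \<le> qf B \<Longrightarrow> D + 2 - \<lceil>real M / real (qf B)\<rceil> \<le> e B"
  shows "D + 1 \<le> (\<Sum>B\<in>Bad. e B)"
proof -
  have "Bad \<noteq> {}"
    using assms(2,3) by auto
  define t where "t = Max (qf ` Bad)"
  have "t \<in> qf ` Bad"
    unfolding t_def using assms(1) \<open>Bad \<noteq> {}\<close> by (intro Max_in) auto
  then obtain B0 where B0: "B0 \<in> Bad" "qf B0 = t"
    by blast
  have "M \<le> card Bad * t"
    using assms(3) sum_bounded_above[of Bad qf t] assms(1) by (auto simp: t_def)
  have ceiling_le: "\<lceil>real M / real t'\<rceil> \<le> int (card Bad)" if "t \<le> t'" "0 < t'" for t'
  proof -
    have "M \<le> card Bad * t'"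
      using \<open>M \<le> card Bad * t\<close> mult_le_mono2[OF that(1), of "card Bad"] by linarith
    then have "real M \<le> real (card Bad) * real t'"
      by (simp add: of_nat_mult[symmetric] del: of_nat_mult)
    then show ?thesis
      using that(2) by (simp add: ceiling_le_iff divide_le_eq)
  qed
  have card_le: "int (card Bad) \<le> (\<Sum>B\<in>Bad. e B)"
    using sum_mono[of Bad "\<lambda>_. 1" e] assms(6) by simp
  show ?thesis
  proof (cases "s + 1 \<le> t")
    case True
    have "int (card (Bad - {B0})) \<le> (\<Sum>B\<in>Bad - {B0}. e B)"
      using sum_mono[of "Bad - {B0}" "\<lambda>_. 1" e] assms(6) by simp
    moreover have "(\<Sum>B\<in>Bad. e B) = e B0 + (\<Sum>B\<in>Bad - {B0}. e B)"
      using sum.remove[OF assms(1) B0(1)] .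
    moreover have "D + 2 - \<lceil>real M / real t\<rceil> \<le> e B0"
      using assms(7)[OF B0(1)] True B0(2) by simp
    ultimately show ?thesis
      using ceiling_le[of t] True card_Diff1_less[OF assms(1) B0(1)] \<open>Bad \<noteq> {}\<close> assms(1)
        card_Diff_singleton[OF B0(1)] card_gt_0_iff[of Bad] by linarith
  next
    case False
    then show ?thesis
      using ceiling_le[of s] assms(4,5) card_le by linarith
  qed
qed

text \<open>Fewer than \<open>l\<close> balanced blocks would cover at most \<open>q - s\<close> elements of the first
  decomposition, so the remaining blocks would have size at least \<open>n - q + s\<close> in total and,
  by \<open>sum_excess_lower_bound\<close>, an excess larger than \<open>r - n\<close>.\<close>

lemma card_balanced_blocks_ge:
  fixes BB :: "'b set" and qf rf :: "'b \<Rightarrow> nat"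
  assumes "finite BB" and "(\<Sum>B\<in>BB. qf B) = n" and "(\<Sum>B\<in>BB. rf B) = r"
    and "\<And>B. B \<in> BB \<Longrightarrow> qf B \<le> rf B"
    and "\<And>B. B \<in> BB \<Longrightarrow> s + 1 \<le> qf B \<Longrightarrow>
      1 + max 0 (int r - int n - \<lceil>real (n - q + s) / real (qf B)\<rceil> + 1) \<le> int (rf B) - int (qf B)"
    and "1 \<le> s" and "s * l \<le> q" and "q < n" and "int r - int n \<le> \<lceil>real (n - q) / real s\<rceil>"
  shows "l \<le> card {B\<in>BB. 1 \<le> qf B \<and> qf B \<le> s \<and> rf B \<le> qf B}"
proof (rule ccontr)
  define G where "G = {B\<in>BB. 1 \<le> qf B \<and> qf B \<le> s \<and> rf B \<le> qf B}"
  define Bad where "Bad = {B\<in>BB. 1 \<le> qf B} - G"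
  define e where "e B = int (rf B) - int (qf B)" for B
  assume "\<not> l \<le> card {B\<in>BB. 1 \<le> qf B \<and> qf B \<le> s \<and> rf B \<le> qf B}"
  then have "card G + 1 \<le> l"
    by (simp add: G_def)
  then have "(card G + 1) * s \<le> q"
    using assms(7) mult_le_mono1[of "card G + 1" l s] by (metis mult.commute order_trans)
  moreover have "(\<Sum>B\<in>G. qf B) \<le> card G * s"
    using sum_bounded_above[of G qf s] by (auto simp: G_def)
  moreover have "n = (\<Sum>B\<in>G. qf B) + (\<Sum>B\<in>Bad. qf B)"
  proof -
    have "n = (\<Sum>B\<in>{B\<in>BB. 1 \<le> qf B}. qf B)"
      unfolding assms(2)[symmetric] using assms(1) by (intro sum.mono_neutral_right) auto
    also have "\<dots> = (\<Sum>B\<in>G. qf B) + (\<Sum>B\<in>Bad. qf B)"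
    proof -
      have "G \<subseteq> {B\<in>BB. 1 \<le> qf B}" "finite {B\<in>BB. 1 \<le> qf B}"
        using assms(1) by (auto simp: G_def)
      then show ?thesis
        using sum.subset_diff[of G "{B\<in>BB. 1 \<le> qf B}" qf] unfolding Bad_def by (simp add: add.commute)
    qed
    finally show ?thesis .
  qed
  ultimately have "n - q + s \<le> (\<Sum>B\<in>Bad. qf B)"
    using assms(8) by (simp add: algebra_simps)
  have "(\<Sum>B\<in>BB. e B) = int r - int n"
    using assms(2,3) by (simp add: e_def sum_subtractf of_nat_sum[symmetric])
  then have "(\<Sum>B\<in>Bad. e B) \<le> int r - int n"
    using assms(1,4) sum_mono2[of BB Bad e] by (force simp: Bad_def e_def)
  moreover have "int r - int n + 1 \<le> (\<Sum>B\<in>Bad. e B)"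
  proof (rule sum_excess_lower_bound[of _ "n - q + s" qf])
    have "real (n - q + s) / real s = real (n - q) / real s + 1"
      using assms(6,8) by (simp add: field_simps)
    then show "int r - int n + 1 \<le> \<lceil>real (n - q + s) / real s\<rceil>"
      using assms(9) by simp
    show "1 \<le> e B" if "B \<in> Bad" for B
      using that assms(4,5)[of B] by (cases "s + 1 \<le> qf B") (auto simp: Bad_def G_def e_def)
    show "int r - int n + 2 - \<lceil>real (n - q + s) / real (qf B)\<rceil> \<le> e B"
      if "B \<in> Bad" "s + 1 \<le> qf B" for B
      using that assms(5)[of B] by (auto simp: Bad_def e_def)
  qed (use assms(1,6,8) \<open>n - q + s \<le> (\<Sum>B\<in>Bad. qf B)\<close> in \<open>auto simp: Bad_def\<close>)
  ultimately show False
    by linarith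
qed

section \<open>Subpartitions from minimal vanishing blocks\<close>

definition signed_tensor ::
    "nat \<Rightarrow> (nat \<Rightarrow> nat \<Rightarrow> 'i \<Rightarrow> 'a) \<Rightarrow> (nat \<Rightarrow> nat \<Rightarrow> 'i \<Rightarrow> 'a) \<Rightarrow> nat + nat \<Rightarrow> (nat \<Rightarrow> 'i) \<Rightarrow> 'a::field"
  where "signed_tensor m x y = case_sum (\<lambda>a. ptensor m (x a)) (\<lambda>b. - ptensor m (y b))"

lemma Inl_vimage_Un_Inr_vimage: "Inl ` (Inl -` B) \<union> Inr ` (Inr -` B) = B"
proof
  show "B \<subseteq> Inl ` (Inl -` B) \<union> Inr ` (Inr -` B)"
  proof
    fix k assume "k \<in> B"
    then show "k \<in> Inl ` (Inl -` B) \<union> Inr ` (Inr -` B)"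
      by (cases k) auto
  qed
qed auto

lemma card_vimage_Inl_Inr:
  fixes B :: "('a + 'b) set"
  assumes "finite B"
  shows "card B = card (Inl -` B) + card (Inr -` B)"
proof -
  let ?L = "Inl ` (Inl -` B) :: ('a + 'b) set" and ?R = "Inr ` (Inr -` B) :: ('a + 'b) set"
  have "finite ?L" "finite ?R"
    using assms by (intro finite_imageI finite_vimageI; simp)+
  then have "card (?L \<union> ?R) = card ?L + card ?R"
    by (rule card_Un_disjoint) auto
  then show ?thesis
    by (simp only: Inl_vimage_Un_Inr_vimage card_image inj_Inl inj_Inr inj_on_subset[OF _ subset_UNIV])
qed

lemma sum_signed_tensor:
  fixes B :: "(nat + nat) set"
  assumes "finite B"
  shows "(\<Sum>k\<in>B. signed_tensor m x y k) = tsum m x (Inl -` B) - tsum m y (Inr -` B)"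
proof -
  let ?L = "Inl ` (Inl -` B) :: (nat + nat) set" and ?R = "Inr ` (Inr -` B) :: (nat + nat) set"
  have "finite ?L" "finite ?R"
    using assms by (intro finite_imageI finite_vimageI; simp)+
  have "(\<Sum>k\<in>B. signed_tensor m x y k) = (\<Sum>k\<in>?L \<union> ?R. signed_tensor m x y k)"
    by (simp only: Inl_vimage_Un_Inr_vimage)
  also have "\<dots> = (\<Sum>k\<in>?L. signed_tensor m x y k) + (\<Sum>k\<in>?R. signed_tensor m x y k)"
    using \<open>finite ?L\<close> \<open>finite ?R\<close> by (rule sum.union_disjoint) auto
  also have "(\<Sum>k\<in>?L. signed_tensor m x y k) = (\<Sum>a\<in>Inl -` B. ptensor m (x a))"
    by (subst sum.reindex) (auto simp: signed_tensor_def)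
  also have "(\<Sum>k\<in>?R. signed_tensor m x y k) = - (\<Sum>b\<in>Inr -` B. ptensor m (y b))"
    by (subst sum.reindex) (auto simp: signed_tensor_def sum_negf)
  finally show ?thesis
    by (simp add: tsum_def fun_eq_iff)
qed

lemma signed_tensor_eq:
  "signed_tensor m x y
    = (\<lambda>k. fscale (case_sum (\<lambda>_. 1) (\<lambda>_. - 1) k) (prod_tensor {1..m} (case_sum x y k)))"
  by (auto simp: fun_eq_iff signed_tensor_def fscale_def ptensor_def prod_tensor_def split: sum.split)

lemma vdim_minimal_block_le:
  fixes x y :: "nat \<Rightarrow> nat \<Rightarrow> 'i \<Rightarrow> 'a::field"
  assumes "finite B" and "B \<noteq> {}" and "\<And>k. k \<in> B \<Longrightarrow> is_product_tensor m (case_sum x y k)"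
    and "minimal_zero_sum (signed_tensor m x y) B"
  shows "(\<Sum>j\<in>{1..m}. int (vdim {x a j | a. a \<in> Inl -` B}) - 1) + 2 \<le> int (card B)"
proof -
  let ?F = "case_sum x y" and ?c = "case_sum (\<lambda>_. 1) (\<lambda>_. - 1) :: nat + nat \<Rightarrow> 'a"
  have "(\<Sum>j\<in>{1..m}. fvs.dim ((\<lambda>k. ?F k j) ` B)) + 2 \<le> card B + card {1..m}"
  proof (rule minimal_zero_sum_prod_tensor_dims[of _ _ _ ?c])
    show "minimal_zero_sum (\<lambda>k. fscale (?c k) (prod_tensor {1..m} (?F k))) B"
      using assms(4) by (simp add: signed_tensor_eq)
    show "?F k j \<noteq> 0" if "k \<in> B" "j \<in> {1..m}" for k j
      using assms(3)[OF that(1)] that(2) by (simp add: is_product_tensor_def)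
    show "?c k \<noteq> 0" for k
      by (cases k) simp_all
  qed (use assms(1,2) in auto)
  moreover have "vdim {x a j | a. a \<in> Inl -` B} \<le> fvs.dim ((\<lambda>k. ?F k j) ` B)" for j
    unfolding vdim_def using assms(1) by (intro dim_subset_finite) force+
  then have "(\<Sum>j\<in>{1..m}. int (vdim {x a j | a. a \<in> Inl -` B}))
      \<le> (\<Sum>j\<in>{1..m}. int (fvs.dim ((\<lambda>k. ?F k j) ` B)))"
    by (intro sum_mono) simp
  ultimately show ?thesis
    by (simp add: sum_subtractf of_nat_sum[symmetric] del: of_nat_sum)
qed

lemma card_le_card_if_irreducible_pair:
  assumes "irreducible_pair m n r x y" and "Q \<subseteq> {1..n}" and "R \<subseteq> {1..r}"
    and "tsum m x Q = tsum m y R"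
  shows "card Q \<le> card R"
  using assms unfolding irreducible_pair_def reducible_def by (meson not_le)

lemma sum_card_vimage_partition:
  assumes "finite K" and "partition_on K BB" and "inj f"
  shows "(\<Sum>B\<in>BB. card (f -` B)) = card (f -` K)"
proof -
  have "card (f -` K) = card (\<Union>B\<in>BB. f -` B)"
    using partition_onD1[OF assms(2)] by (simp add: vimage_Union)
  also have "\<dots> = (\<Sum>B\<in>BB. card (f -` B))"
  proof (rule card_UN_disjoint)
    show "finite BB"
      using finite_elements[OF assms(1,2)] .
    show "\<forall>B\<in>BB. finite (f -` B)"
      using assms partition_onD1[OF assms(2)] by (auto intro!: finite_vimageI intro: finite_subset)
    show "\<forall>B\<in>BB. \<forall>B'\<in>BB. B \<noteq> B' \<longrightarrow> f -` B \<inter> f -` B' = {}"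
      using partition_onD2[OF assms(2)] by (auto simp: disjoint_def)
  qed
  finally show ?thesis ..
qed

lemma vimage_Inl_Plus [simp]: "Inl -` (A <+> B) = A"
  and vimage_Inr_Plus [simp]: "Inr -` (A <+> B) = B"
  by auto

lemma minimal_blocks_of_equal_sums:
  fixes x y :: "nat \<Rightarrow> nat \<Rightarrow> 'i \<Rightarrow> 'a::field"
  assumes "tsum m x {1..n} = tsum m y {1..r}"
  obtains BB where "partition_on ({1..n} <+> {1..r}) BB"
    and "\<And>B. B \<in> BB \<Longrightarrow> minimal_zero_sum (signed_tensor m x y) B"
    and "\<And>B. B \<in> BB \<Longrightarrow> tsum m x (Inl -` B) = tsum m y (Inr -` B)"
proof -
  have "(\<Sum>k\<in>{1..n} <+> {1..r}. signed_tensor m x y k) = tsum m x {1..n} - tsum m y {1..r}"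
    using sum_signed_tensor[of "{1..n} <+> {1..r}" m x y] by simp
  then have "(\<Sum>k\<in>{1..n} <+> {1..r}. signed_tensor m x y k) = 0"
    using assms by simp
  then obtain BB where BB: "partition_on ({1..n} <+> {1..r}) BB"
    "\<And>B. B \<in> BB \<Longrightarrow> minimal_zero_sum (signed_tensor m x y) B"
    using exists_partition_minimal_zero_sum[of "{1..n} <+> {1..r}" "signed_tensor m x y"] by auto
  moreover have "tsum m x (Inl -` B) = tsum m y (Inr -` B)" if "B \<in> BB" for B
  proof -
    have "B \<subseteq> {1..n} <+> {1..r}"
      using that partition_onD1[OF BB(1)] by blast
    then have "finite B"
      by (rule finite_subset) simp
    then show ?thesis
      using sum_signed_tensor[OF \<open>finite B\<close>, of m x y] BB(2)[OF that] by (simp add: minimal_zero_sum_def)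
  qed
  ultimately show thesis
    using that by blast
qed

lemma excess_of_minimal_block:
  fixes x y :: "nat \<Rightarrow> nat \<Rightarrow> 'i \<Rightarrow> 'a::field" and E :: "nat \<Rightarrow> int"
  assumes hyp: "\<And>S. S \<subseteq> {1..n} \<Longrightarrow> s + 1 \<le> card S \<Longrightarrow> card S \<le> n \<Longrightarrow>
      2 * int (card S) + E (card S) \<le> (\<Sum>j\<in>{1..m}. int (vdim {x a j | a. a \<in> S}) - 1) + 1"
    and block: "B \<subseteq> {1..n} <+> {1..r}" "B \<noteq> {}"
    and "\<forall>a\<in>{1..n}. is_product_tensor m (x a)" and "\<forall>a\<in>{1..r}. is_product_tensor m (y a)"
    and "minimal_zero_sum (signed_tensor m x y) B" and "s + 1 \<le> card (Inl -` B)"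
  shows "1 + E (card (Inl -` B)) \<le> int (card (Inr -` B)) - int (card (Inl -` B))"
proof -
  have "finite B"
    using block(1) by (rule finite_subset) simp
  have "Inl -` B \<subseteq> {1..n}"
    using block(1) by auto
  then have "card (Inl -` B) \<le> n"
    using card_mono[of "{1..n}" "Inl -` B"] by simp
  have "\<And>k. k \<in> B \<Longrightarrow> is_product_tensor m (case_sum x y k)"
    using block(1) assms(4,5) by auto
  then have "(\<Sum>j\<in>{1..m}. int (vdim {x a j | a. a \<in> Inl -` B}) - 1) + 2 \<le> int (card B)"
    using vdim_minimal_block_le[OF \<open>finite B\<close> block(2) _ assms(6)] by blast
  then show ?thesis
    using hyp[OF \<open>Inl -` B \<subseteq> {1..n}\<close> assms(7) \<open>card (Inl -` B) \<le> n\<close>] card_vimage_Inl_Inr[OF \<open>finite B\<close>]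
    by linarith
qed

lemma has_subpartition_of_balanced_blocks:
  assumes part: "partition_on ({1..n} <+> {1..r}) BB"
    and equal: "\<And>B. B \<in> BB \<Longrightarrow> tsum m x (Inl -` B) = tsum m y (Inr -` B)"
    and "l \<le> card {B\<in>BB. 1 \<le> card (Inl -` B) \<and> card (Inl -` B) \<le> s \<and> card (Inr -` B) \<le> card (Inl -` B)}"
  shows "has_subpartition m n r x y s l"
proof -
  let ?G = "{B\<in>BB. 1 \<le> card (Inl -` B) \<and> card (Inl -` B) \<le> s \<and> card (Inr -` B) \<le> card (Inl -` B)}"
  obtain G' where G': "G' \<subseteq> ?G" "card G' = l"
    using obtain_subset_with_card_n[OF assms(3)] by blast
  have "finite G'"
    using G'(1) finite_elements[OF _ part] by (auto intro: finite_subset)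
  then obtain h where h_bij: "bij_betw h {1..l} G'"
    using ex_bij_betw_nat_finite_1[of G'] G'(2) by metis
  then have h_in: "h p \<in> ?G" if "p \<in> {1..l}" for p
    using that G'(1) bij_betwE by blast
  have h_inj: "h p \<noteq> h p'" if "p \<in> {1..l}" "p' \<in> {1..l}" "p \<noteq> p'" for p p'
    using that bij_betw_imp_inj_on[OF h_bij] by (auto dest: inj_onD)
  define Q where "Q p = Inl -` h p" for p
  define R where "R p = Inr -` h p" for p
  have "h p \<subseteq> {1..n} <+> {1..r}" if "p \<in> {1..l}" for p
    using h_in[OF that] partition_onD1[OF part] by blast
  then have "\<forall>p\<in>{1..l}. Q p \<subseteq> {1..n} \<and> R p \<subseteq> {1..r}"
    by (force simp: Q_def R_def)
  moreover have "h p \<inter> h p' = {}" if "p \<in> {1..l}" "p' \<in> {1..l}" "p \<noteq> p'" for p p'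
    using disjointD[OF partition_onD2[OF part]] h_in[OF that(1)] h_in[OF that(2)] h_inj[OF that]
    by blast
  then have "\<forall>p\<in>{1..l}. \<forall>p'\<in>{1..l}. p \<noteq> p' \<longrightarrow> Q p \<inter> Q p' = {} \<and> R p \<inter> R p' = {}"
    by (simp add: Q_def R_def vimage_Int[symmetric])
  moreover have "\<forall>p\<in>{1..l}. max 1 (card (R p)) \<le> card (Q p) \<and> card (Q p) \<le> s
      \<and> tsum m x (Q p) = tsum m y (R p)"
    using h_in equal by (simp add: Q_def R_def)
  ultimately show ?thesis
    unfolding has_subpartition_def by blast
qed

theorem theorem7p9:
  fixes x y :: "nat \<Rightarrow> nat \<Rightarrow> 'i \<Rightarrow> 'a::field"
    and n m q s r l :: nat
  assumes "n \<ge> 2" and "m \<ge> 2"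
    and "1 \<le> q" and "q \<le> n - 1"
    and "1 \<le> s" and "s \<le> q"
    and "n + 1 \<le> r"
    and "real r \<le> real n + of_int \<lceil>real (n - q) / real s\<rceil>"
    and "l = nat \<lfloor>real q / real s\<rfloor>"
    and "\<forall>a\<in>{1..n}. is_product_tensor m (x a)"
    and "\<And>S. S \<subseteq> {1..n} \<Longrightarrow> s + 1 \<le> card S \<Longrightarrow> card S \<le> n \<Longrightarrow>
          2 * int (card S)
          + max 0 (int r - int n - \<lceil>real (n - q + s) / real (card S)\<rceil> + 1)
          \<le> (\<Sum>j\<in>{1..m}. int (vdim {x a j | a. a \<in> S}) - 1) + 1"
    and "\<forall>a\<in>{1..r}. is_product_tensor m (y a)"
    and "tsum m x {1..n} = tsum m y {1..r}"
    and "irreducible_pair m n r x y"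
  shows "has_subpartition m n r x y s l"
proof -
  obtain BB where part: "partition_on ({1..n} <+> {1..r}) BB"
    and minimal: "\<And>B. B \<in> BB \<Longrightarrow> minimal_zero_sum (signed_tensor m x y) B"
    and equal: "\<And>B. B \<in> BB \<Longrightarrow> tsum m x (Inl -` B) = tsum m y (Inr -` B)"
    using minimal_blocks_of_equal_sums[OF assms(13)] by blast
  have block: "B \<subseteq> {1..n} <+> {1..r}" "B \<noteq> {}" if "B \<in> BB" for B
    using that partition_onD1[OF part] partition_onD3[OF part] by blast+
  have "l \<le> card {B\<in>BB. 1 \<le> card (Inl -` B) \<and> card (Inl -` B) \<le> s \<and> card (Inr -` B) \<le> card (Inl -` B)}"
  proof (rule card_balanced_blocks_ge[where q = q])
    show "(\<Sum>B\<in>BB. card (Inl -` B)) = n" and "(\<Sum>B\<in>BB. card (Inr -` B)) = r"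
      using sum_card_vimage_partition[OF _ part, of Inl] sum_card_vimage_partition[OF _ part, of Inr]
      by auto
    show "card (Inl -` B) \<le> card (Inr -` B)" if "B \<in> BB" for B
      using block(1)[OF that] by (intro card_le_card_if_irreducible_pair[OF assms(14) _ _ equal[OF that]]) auto
    show "1 + max 0 (int r - int n - \<lceil>real (n - q + s) / real (card (Inl -` B))\<rceil> + 1)
        \<le> int (card (Inr -` B)) - int (card (Inl -` B))" if "B \<in> BB" "s + 1 \<le> card (Inl -` B)" for B
      by (rule excess_of_minimal_block[OF assms(11) block[OF that(1)] assms(10,12) minimal[OF that(1)] that(2)])
    show "s * l \<le> q"
      using assms(9) by (simp add: floor_divide_of_nat_eq)
  qed (use finite_elements[OF _ part] assms(1,4,5,8) in auto)
  with part equal show ?thesis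
    by (rule has_subpartition_of_balanced_blocks)
qed

end
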